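(* Let $n>2$ be an integer, $p_1,\dots,p_n$ distinct primes, and $(X,r)$ an indecomposable multipermutation solution of the YBE with $|X|=p_1\cdots p_n$ and multipermutation level $n$. Then $|\mathcal G(X,r)|>p_1\cdots p_n$.
   Context: A solution of the Yang–Baxter equation (YBE) is a pair $(X,r)$, where $X$ is a non-empty set and $r\colon X\times X\to X\times X$, written $r(x,y)=(\sigma_x(y),\gamma_y(x))$, satisfies: $r^2=\mathrm{id}$; all $\sigma_x,\gamma_y$ are bijections of $X$; and $r_{12}r_{23}r_{12}=r_{23}r_{12}r_{23}$ on $X^3$, where $r_{12}=r\times\mathrm{id}_X$, $r_{23}=\mathrm{id}_X\times r$. $\mathcal G(X,r)=\langle\sigma_x:x\in X\rangle\le\mathrm{Sym}_X$; $(X,r)$ is indecomposable if $\mathcal G(X,r)$ is transitive on $X$. Retract: $x\sim y\iff\sigma_x=\sigma_y$, inducing a solution $\mathrm{Ret}(X,r)$ on $X/{\sim}$; $\mathrm{Ret}^k$ is the $k$-fold iterate; $(X,r)$ is multipermutation if $|\mathrm{Ret}^k(X,r)|=1$ for some $k\ge1$, the least such $k$ being its multipermutation level. *)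

theory Defs
  imports "HOL-Algebra.Bij" "HOL-Algebra.Generated_Groups" "HOL-Computational_Algebra.Primes"
begin

definition ybe_sigma :: "('a \<times> 'a \<Rightarrow> 'a \<times> 'a) \<Rightarrow> 'a \<Rightarrow> 'a \<Rightarrow> 'a" where
  "ybe_sigma r x y = fst (r (x, y))"

definition ybe_gamma :: "('a \<times> 'a \<Rightarrow> 'a \<times> 'a) \<Rightarrow> 'a \<Rightarrow> 'a \<Rightarrow> 'a" where
  "ybe_gamma r y x = snd (r (x, y))"

definition ybe_solution :: "'a set \<Rightarrow> ('a \<times> 'a \<Rightarrow> 'a \<times> 'a) \<Rightarrow> bool" where
  "ybe_solution X r \<longleftrightarrow>
     X \<noteq> {} \<and>
     (\<forall>x\<in>X. \<forall>y\<in>X. r (x, y) \<in> X \<times> X) \<and>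
     (\<forall>x\<in>X. \<forall>y\<in>X. r (r (x, y)) = (x, y)) \<and>
     (\<forall>x\<in>X. bij_betw (ybe_sigma r x) X X) \<and>
     (\<forall>y\<in>X. bij_betw (ybe_gamma r y) X X) \<and>
     (\<forall>x\<in>X. \<forall>y\<in>X. \<forall>z\<in>X.
        (let r12 = (\<lambda>(a, b, c). (fst (r (a, b)), snd (r (a, b)), c));
             r23 = (\<lambda>(a, b, c). (a, fst (r (b, c)), snd (r (b, c))))
         in r12 (r23 (r12 (x, y, z))) = r23 (r12 (r23 (x, y, z)))))"

text \<open>The permutation group G(X,r) = < sigma_x : x in X > inside Sym_X
  (bijections of X, taken extensional, as in HOL-Algebra's BijGroup).\<close>

definition ybe_group :: "'a set \<Rightarrow> ('a \<times> 'a \<Rightarrow> 'a \<times> 'a) \<Rightarrow> ('a \<Rightarrow> 'a) set" where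
  "ybe_group X r = generate (BijGroup X) ((\<lambda>x. restrict (ybe_sigma r x) X) ` X)"

definition ybe_indecomposable :: "'a set \<Rightarrow> ('a \<times> 'a \<Rightarrow> 'a \<times> 'a) \<Rightarrow> bool" where
  "ybe_indecomposable X r \<longleftrightarrow> (\<forall>x\<in>X. \<forall>y\<in>X. \<exists>g\<in>ybe_group X r. g x = y)"

text \<open>Iterated retraction, pulled back to X: ret_rel X r k is the equivalence relation on X
  whose classes are the elements of Ret^k(X,r).\<close>

fun ret_rel :: "'a set \<Rightarrow> ('a \<times> 'a \<Rightarrow> 'a \<times> 'a) \<Rightarrow> nat \<Rightarrow> ('a \<times> 'a) set" where
  "ret_rel X r 0 = Id_on X"
| "ret_rel X r (Suc k) =
     {(x, y). x \<in> X \<and> y \<in> X \<and> (\<forall>z\<in>X. (ybe_sigma r x z, ybe_sigma r y z) \<in> ret_rel X r k)}"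

definition ret_card :: "'a set \<Rightarrow> ('a \<times> 'a \<Rightarrow> 'a \<times> 'a) \<Rightarrow> nat \<Rightarrow> nat" where
  "ret_card X r k = card (X // ret_rel X r k)"

definition mp_level :: "'a set \<Rightarrow> ('a \<times> 'a \<Rightarrow> 'a \<times> 'a) \<Rightarrow> nat \<Rightarrow> bool" where
  "mp_level X r m \<longleftrightarrow> m \<ge> 1 \<and> ret_card X r m = 1 \<and> (\<forall>k. 1 \<le> k \<and> k < m \<longrightarrow> ret_card X r k \<noteq> 1)"

definition multipermutation :: "'a set \<Rightarrow> ('a \<times> 'a \<Rightarrow> 'a \<times> 'a) \<Rightarrow> bool" where
  "multipermutation X r \<longleftrightarrow> (\<exists>k\<ge>1. ret_card X r k = 1)"

end

theory Submission
  imports Defs "HOL-Algebra.Multiplicative_Group" "HOL-Computational_Algebra.Squarefree"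
begin

text \<open>If \<open>|\<G>| \<le> |X|\<close>, transitivity forces \<open>\<G>\<close> to act regularly, so \<open>g \<mapsto> g x0\<close> identifies
  \<open>\<G>\<close> with \<open>X\<close>. The retraction filtration then becomes a chain of subgroups
  \<open>1 = H\<^sub>0 \<subset> \<dots> \<subset> H\<^sub>n = \<G>\<close> (stabilizers of the class of \<open>x0\<close> in \<open>Ret\<^sup>k\<close>); as \<open>|\<G>|\<close> is
  squarefree with at most \<open>n\<close> prime factors, every step has prime index, and this forces \<open>H\<^sub>j\<close>
  to equal the kernel of the action on \<open>Ret\<^sup>j\<close> for \<open>j < n\<close>. The map \<open>x \<mapsto> \<sigma>\<^sub>x\<close>, transported to
  \<open>\<G>\<close>, satisfies the cycle set identity and is compatible with the three top layers
  \<open>K \<subset> P \<subset> A \<subset> \<G>\<close>. Since \<open>P/K\<close> has prime order, commutators centralize it, and a coprimality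
  argument on powers shows that all \<open>\<sigma>\<^sub>x\<close> lie in \<open>A = H\<^bsub>n-1\<^esub>\<close>; then \<open>\<G> \<subseteq> H\<^bsub>n-1\<^esub>\<close>, which is
  impossible when \<open>n > 2\<close>.\<close>

declare mult_FactGroup[simp del] one_FactGroup[simp del]

section \<open>Cosets and powers in finite groups\<close>

context group
begin

lemma inv_mult_cancel_left [simp]:
  "x \<in> carrier G \<Longrightarrow> y \<in> carrier G \<Longrightarrow> inv x \<otimes> (x \<otimes> y) = y"
  by (simp add: m_assoc[symmetric])

lemma mult_inv_cancel_left [simp]:
  "x \<in> carrier G \<Longrightarrow> y \<in> carrier G \<Longrightarrow> x \<otimes> (inv x \<otimes> y) = y"
  by (simp add: m_assoc[symmetric])

lemma subgroup_rcos_eq_iff: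
  assumes "subgroup H G" "x \<in> carrier G" "y \<in> carrier G"
  shows "H #> x = H #> y \<longleftrightarrow> x \<otimes> inv y \<in> H"
proof
  assume "H #> x = H #> y"
  then have "x \<in> H #> y" using repr_independenceD[OF assms(1,2), of y] by simp
  then show "x \<otimes> inv y \<in> H" using subgroup.rcos_module_imp[OF assms(1) is_group assms(3)] by blast
next
  assume "x \<otimes> inv y \<in> H"
  then have "x \<in> H #> y" by (rule subgroup.rcos_module_rev[OF assms(1) is_group assms(3,2)])
  then show "H #> x = H #> y" using repr_independence[OF _ assms(3,1)] by simp
qed

lemma normal_rcos_eq_iff:
  assumes "N \<lhd> G" "x \<in> carrier G" "y \<in> carrier G"
  shows "N #> x = N #> y \<longleftrightarrow> inv x \<otimes> y \<in> N"
proof -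
  interpret N: normal N G by fact
  have "inv x \<otimes> y \<in> N \<longleftrightarrow> y \<otimes> inv x \<in> N"
  proof
    assume "inv x \<otimes> y \<in> N"
    then have "x \<otimes> (inv x \<otimes> y) \<otimes> inv x \<in> N" using N.inv_op_closed2 assms by blast
    then show "y \<otimes> inv x \<in> N" using assms by (simp add: m_assoc)
  next
    assume "y \<otimes> inv x \<in> N"
    then have "inv x \<otimes> (y \<otimes> inv x) \<otimes> x \<in> N" using N.inv_op_closed1 assms by blast
    then show "inv x \<otimes> y \<in> N" using assms by (simp add: m_assoc)
  qed
  then show ?thesis
    using subgroup_rcos_eq_iff[OF N.subgroup_axioms assms(3,2)] by auto
qed

lemma rcos_eq_self_iff:
  assumes "subgroup H G" "x \<in> carrier G"
  shows "H #> x = H \<longleftrightarrow> x \<in> H"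
  using coset_join1 coset_join2 assms by blast

lemma normal_rcos_group_hom:
  assumes "N \<lhd> G"
  shows "group_hom G (G Mod N) (\<lambda>x. N #> x)"
  using normal.factorgroup_is_group[OF assms] normal.r_coset_hom_Mod[OF assms] is_group
  by (simp add: group_hom_def group_hom_axioms_def)

lemma normal_rcos_cong:
  assumes "N \<lhd> G" "u \<in> carrier G" "x \<in> carrier G" "y \<in> carrier G" "v \<in> carrier G"
    and "N #> x = N #> y"
  shows "N #> (u \<otimes> x \<otimes> v) = N #> (u \<otimes> y \<otimes> v)"
proof -
  interpret group_hom G "G Mod N" "\<lambda>x. N #> x" using normal_rcos_group_hom[OF assms(1)] .
  show ?thesis using assms(2-6) by simp
qed

lemma normal_rcos_mult_left_cong:
  assumes "N \<lhd> G" "u \<in> carrier G" "x \<in> carrier G" "y \<in> carrier G" "N #> x = N #> y"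
  shows "N #> (u \<otimes> x) = N #> (u \<otimes> y)"
  using normal_rcos_cong[OF assms(1-4) one_closed assms(5)] assms(2-4) by simp

lemma normal_rcos_inv_cong:
  assumes "N \<lhd> G" "x \<in> carrier G" "y \<in> carrier G" "N #> x = N #> y"
  shows "N #> inv x = N #> inv y"
proof -
  interpret group_hom G "G Mod N" "\<lambda>x. N #> x" using normal_rcos_group_hom[OF assms(1)] .
  show ?thesis using assms(2-4) by simp
qed

lemma subgroup_nat_pow_closed:
  assumes "subgroup H G" "x \<in> H"
  shows "x [^] (n::nat) \<in> H"
  by (induction n) (use assms in \<open>simp_all add: subgroup.one_closed subgroup.m_closed subgroup.mem_carrier\<close>)

lemma coprime_nat_pow_mem:
  assumes "subgroup H G" "x \<in> carrier G" "coprime a b" "a > 0"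
    and "x [^] (a::nat) \<in> H" "x [^] (b::nat) \<in> H"
  shows "x \<in> H"
proof -
  obtain u v where "a * u = b * v + gcd a b" using bezout_nat[of a b] assms(4) by auto
  then have uv: "a * u = Suc (b * v)" using assms(3) by simp
  have "x = inv (x [^] (b * v)) \<otimes> x [^] (a * u)"
    unfolding uv using assms(2) by (simp add: m_assoc[symmetric])
  moreover have "x [^] (a * u) \<in> H" "x [^] (b * v) \<in> H"
    using subgroup_nat_pow_closed[OF assms(1)] assms(2,5,6) by (simp_all add: nat_pow_pow[symmetric])
  ultimately show ?thesis by (metis subgroup.m_closed subgroup.m_inv_closed assms(1))
qed

lemma card_subgroup_dvd:
  assumes "finite (carrier G)" "subgroup H G" "subgroup H' G" "H \<subseteq> H'"
  shows "card H dvd card H'"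
proof -
  have "group (G\<lparr>carrier := H'\<rparr>)" using subgroup.subgroup_is_group[OF assms(3) is_group] .
  moreover have "subgroup H (G\<lparr>carrier := H'\<rparr>)" using subgroup_incl[OF assms(2,3,4)] .
  ultimately have "card (rcosets\<^bsub>G\<lparr>carrier := H'\<rparr>\<^esub> H) * card H = card H'"
    using group.lagrange by (fastforce simp: order_def)
  then show ?thesis by (metis dvd_triv_right)
qed

lemma card_subgroup_gt_0:
  assumes "finite (carrier G)" "subgroup H G"
  shows "card H > 0"
  using assms subgroup.one_closed[OF assms(2)] subgroup.subset[OF assms(2)]
  by (metis card_gt_0_iff empty_iff finite_subset)

lemma nat_pow_index_mem:
  assumes "N \<lhd> G" "subgroup H G" "N \<subseteq> H" "finite (carrier G)"
    and "card H = d * card N" "x \<in> H"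
  shows "x [^] d \<in> N"
proof -
  let ?H = "G\<lparr>carrier := H\<rparr>"
  have gH: "group ?H" using subgroup.subgroup_is_group assms(2) is_group by blast
  have nH: "N \<lhd> ?H" using normal_restrict_supergroup assms by blast
  interpret NH: normal N ?H by (rule nH)
  interpret hom: group_hom ?H "?H Mod N" "\<lambda>y. N #>\<^bsub>?H\<^esub> y"
    using group.normal_rcos_group_hom[OF gH nH] .
  have "card (rcosets\<^bsub>?H\<^esub> N) * card N = d * card N"
    using group.lagrange[OF gH NH.subgroup_axioms] assms(5) by (simp add: order_def)
  then have "order (?H Mod N) = d"
    using card_subgroup_gt_0[OF assms(4) normal_imp_subgroup[OF assms(1)]]
    by (simp add: order_def FactGroup_def)
  then have "(N #>\<^bsub>?H\<^esub> x) [^]\<^bsub>?H Mod N\<^esub> d = \<one>\<^bsub>?H Mod N\<^esub>"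
    using group.pow_order_eq_1[OF NH.factorgroup_is_group] hom.hom_closed assms(6) by simp
  then have "N #>\<^bsub>?H\<^esub> (x [^]\<^bsub>?H\<^esub> d) = N"
    using hom.hom_nat_pow assms(6) by (simp add: one_FactGroup)
  then have "x [^]\<^bsub>?H\<^esub> d \<in> N"
    using group.rcos_eq_self_iff[OF gH NH.subgroup_axioms] monoid.nat_pow_closed[OF group.is_monoid[OF gH]] assms(6)
    by simp
  then show ?thesis by (metis nat_pow_consistent)
qed

lemma conj_nat_pow:
  assumes "x \<in> carrier G" "y \<in> carrier G"
  shows "x \<otimes> y [^] (j::nat) \<otimes> inv x = (x \<otimes> y \<otimes> inv x) [^] j"
proof (induction j)
  case (Suc j)
  have "x \<otimes> y [^] Suc j \<otimes> inv x = (x \<otimes> y [^] j \<otimes> inv x) \<otimes> (x \<otimes> y \<otimes> inv x)"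
    using assms by (simp add: m_assoc)
  then show ?case using Suc by simp
qed (use assms in simp)

text \<open>Conjugations act on the powers of \<open>e\<close> through exponents, which multiply
  commutatively; hence a commutator acts trivially.\<close>

lemma commutator_commute_nat_pow:
  assumes "e \<in> carrier G" "x \<in> carrier G" "y \<in> carrier G"
    and conj_pow: "\<And>u. u \<in> carrier G \<Longrightarrow> \<exists>k::nat. u \<otimes> e \<otimes> inv u = e [^] k"
  shows "(x \<otimes> y \<otimes> inv x \<otimes> inv y) \<otimes> e [^] (j::nat) = e [^] j \<otimes> (x \<otimes> y \<otimes> inv x \<otimes> inv y)"
proof -
  obtain k1 k2 k3 k4 :: nat where x: "x \<otimes> e \<otimes> inv x = e [^] k1" "inv x \<otimes> e \<otimes> inv (inv x) = e [^] k2"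
    and y: "y \<otimes> e \<otimes> inv y = e [^] k3" "inv y \<otimes> e \<otimes> inv (inv y) = e [^] k4"
    using conj_pow assms(2,3) inv_closed by meson
  have conj: "z \<otimes> e [^] (a::nat) \<otimes> inv z = e [^] (k * a)"
    if "z \<in> carrier G" "z \<otimes> e \<otimes> inv z = e [^] (k::nat)" for z a k
    using conj_nat_pow[OF that(1) assms(1), of a] that(2) assms(1) by (simp add: nat_pow_pow)
  have "e = x \<otimes> (inv x \<otimes> e \<otimes> inv (inv x)) \<otimes> inv x" using assms(1,2) by (simp add: m_assoc)
  then have e12: "e [^] (k1 * k2) = e" using x(2) conj[OF assms(2) x(1), of k2] by simp
  have "e = y \<otimes> (inv y \<otimes> e \<otimes> inv (inv y)) \<otimes> inv y" using assms(1,3) by (simp add: m_assoc)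
  then have e34: "e [^] (k3 * k4) = e" using y(2) conj[OF assms(3) y(1), of k4] by simp
  have "(x \<otimes> y \<otimes> inv x \<otimes> inv y) \<otimes> e [^] j \<otimes> inv (x \<otimes> y \<otimes> inv x \<otimes> inv y)
      = x \<otimes> (y \<otimes> (inv x \<otimes> (inv y \<otimes> e [^] j \<otimes> inv (inv y)) \<otimes> inv (inv x)) \<otimes> inv y) \<otimes> inv x"
    using assms(1-3) by (simp add: m_assoc inv_mult_group)
  also have "\<dots> = e [^] (k1 * (k3 * (k2 * (k4 * j))))"
    using conj[OF inv_closed[OF assms(3)] y(2), of j] conj[OF inv_closed[OF assms(2)] x(2)]
      conj[OF assms(3) y(1)] conj[OF assms(2) x(1)] by simp
  also have "\<dots> = ((e [^] (k1 * k2)) [^] (k3 * k4)) [^] j"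
    using assms(1) by (simp add: nat_pow_pow mult.commute mult.left_commute)
  finally have "(x \<otimes> y \<otimes> inv x \<otimes> inv y) \<otimes> e [^] j \<otimes> inv (x \<otimes> y \<otimes> inv x \<otimes> inv y) = e [^] j"
    using e12 e34 by simp
  then show ?thesis using assms(1-3) by (simp add: inv_solve_right')
qed

lemma prime_index_rcos_pow:
  assumes "K \<lhd> G" "subgroup P G" "K \<subseteq> P" "finite (carrier G)" "card P = p * card K" "prime p"
    and "a \<in> P" "a \<notin> K" "b \<in> P"
  shows "\<exists>j::nat. K #> b = K #> (a [^] j)"
proof -
  have aG: "a \<in> carrier G" using subgroup.mem_carrier[OF assms(2,7)] .
  have sK: "subgroup K G" using normal_imp_subgroup[OF assms(1)] .
  have ap: "a [^] p \<in> K" using nat_pow_index_mem[OF assms(1-5,7)] .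
  have step: "a [^] (v - u) \<notin> K" if "u < v" "v < p" for u v
  proof
    assume "a [^] (v - u) \<in> K"
    moreover have "\<not> p dvd (v - u)" using that by (auto dest: dvd_imp_le)
    then have "coprime (v - u) p" using prime_imp_coprime[OF assms(6)] coprime_commute by blast
    ultimately have "a \<in> K" using coprime_nat_pow_mem[OF sK aG _ _ _ ap, of "v - u"] that by simp
    then show False using assms(8) by simp
  qed
  have inj: "inj_on (\<lambda>j. K #> (a [^] j)) {..<p}"
  proof (rule linorder_inj_onI')
    fix u v assume uv: "u \<in> {..<p}" "v \<in> {..<p}" "u < v"
    have "a [^] v = a [^] (v - u) \<otimes> a [^] u"
      using uv(3) aG by (simp add: nat_pow_mult)
    then have "a [^] v \<otimes> inv (a [^] u) = a [^] (v - u)"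
      using aG by (simp add: m_assoc)
    then show "K #> (a [^] u) \<noteq> K #> (a [^] v)"
      using subgroup_rcos_eq_iff[OF sK, of "a [^] v" "a [^] u"] step[of u v] uv aG by auto
  qed
  define R where "R = rcosets\<^bsub>G\<lparr>carrier := P\<rparr>\<^esub> K"
  have R_eq: "R = (\<lambda>y. K #> y) ` P"
    unfolding R_def RCOSETS_def r_coset_def by auto
  have "card R * card K = p * card K"
    using group.lagrange[OF subgroup.subgroup_is_group[OF assms(2) is_group] subgroup_incl[OF sK assms(2,3)]]
    unfolding R_def by (simp add: order_def assms(5))
  then have "card R = p" using card_subgroup_gt_0[OF assms(4) sK] by simp
  moreover have "(\<lambda>j. K #> (a [^] j)) ` {..<p} \<subseteq> R"
    unfolding R_eq using subgroup_nat_pow_closed[OF assms(2,7)] by auto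
  moreover have "finite R"
    unfolding R_eq using finite_subset[OF subgroup.subset[OF assms(2)] assms(4)] by simp
  moreover have "card ((\<lambda>j. K #> (a [^] j)) ` {..<p}) = p" using card_image[OF inj] by simp
  ultimately have "(\<lambda>j. K #> (a [^] j)) ` {..<p} = R" using card_subset_eq by metis
  then show ?thesis using R_eq assms(9) by blast
qed

text \<open>A quotient \<open>P/K\<close> of prime order is cyclic, so conjugation acts on it by powers.\<close>

lemma prime_index_commutator_rcos_commute:
  assumes "K \<lhd> G" "P \<lhd> G" "K \<subseteq> P" "finite (carrier G)" "card P = p * card K" "prime p"
    and "g \<in> carrier G" "h \<in> carrier G" "b \<in> P"
  shows "K #> (g \<otimes> h \<otimes> inv g \<otimes> inv h \<otimes> b) = K #> (b \<otimes> (g \<otimes> h \<otimes> inv g \<otimes> inv h))"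
proof -
  have sP: "subgroup P G" using normal_imp_subgroup[OF assms(2)] .
  have sK: "subgroup K G" using normal_imp_subgroup[OF assms(1)] .
  have "card K < card P"
    using assms(5) prime_gt_1_nat[OF assms(6)] card_subgroup_gt_0[OF assms(4) sK] by simp
  then obtain a where a: "a \<in> P" "a \<notin> K"
    using card_mono[OF finite_subset[OF subgroup.subset[OF sK] assms(4)], of P] by fastforce
  have aG: "a \<in> carrier G" using subgroup.mem_carrier[OF sP a(1)] .
  interpret Q: group "G Mod K" using normal.factorgroup_is_group[OF assms(1)] .
  interpret phi: group_hom G "G Mod K" "\<lambda>x. K #> x" using normal_rcos_group_hom[OF assms(1)] .
  define e where "e = K #> a"
  have eQ: "e \<in> carrier (G Mod K)" unfolding e_def using aG by simp
  have rcos_pow: "\<exists>j::nat. K #> c = e [^]\<^bsub>G Mod K\<^esub> j" if "c \<in> P" for c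
    using prime_index_rcos_pow[OF assms(1) sP assms(3-6) a that] phi.hom_nat_pow[OF aG]
    unfolding e_def by metis
  have "\<exists>k::nat. u \<otimes>\<^bsub>G Mod K\<^esub> e \<otimes>\<^bsub>G Mod K\<^esub> inv\<^bsub>G Mod K\<^esub> u = e [^]\<^bsub>G Mod K\<^esub> k"
    if u: "u \<in> carrier (G Mod K)" for u
  proof -
    obtain x where x: "x \<in> carrier G" "u = K #> x"
      using u unfolding FactGroup_def RCOSETS_def by auto
    then have "u \<otimes>\<^bsub>G Mod K\<^esub> e \<otimes>\<^bsub>G Mod K\<^esub> inv\<^bsub>G Mod K\<^esub> u = K #> (x \<otimes> a \<otimes> inv x)"
      unfolding e_def using aG by simp
    then show ?thesis using rcos_pow normal.inv_op_closed2[OF assms(2) x(1) a(1)] by simp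
  qed
  moreover obtain j :: nat where "K #> b = e [^]\<^bsub>G Mod K\<^esub> j" using rcos_pow assms(9) by blast
  moreover have "K #> g \<in> carrier (G Mod K)" "K #> h \<in> carrier (G Mod K)" using assms(7,8) by simp_all
  ultimately have "(K #> (g \<otimes> h \<otimes> inv g \<otimes> inv h)) \<otimes>\<^bsub>G Mod K\<^esub> (K #> b)
      = (K #> b) \<otimes>\<^bsub>G Mod K\<^esub> (K #> (g \<otimes> h \<otimes> inv g \<otimes> inv h))"
    using Q.commutator_commute_nat_pow[OF eQ] assms(7,8) by simp
  then show ?thesis using assms(7-9) subgroup.mem_carrier[OF sP] by simp
qed

lemma commutator_eq_one_imp_commute:
  assumes "x \<in> carrier G" "y \<in> carrier G" "x \<otimes> y \<otimes> inv x \<otimes> inv y = \<one>"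
  shows "x \<otimes> y = y \<otimes> x"
proof -
  have "x \<otimes> y = (x \<otimes> y \<otimes> inv x \<otimes> inv y) \<otimes> (y \<otimes> x)" using assms(1,2) by (simp add: m_assoc)
  then show ?thesis using assms by simp
qed

lemma mult_eq_imp_mult_inv_eq:
  assumes "x \<in> carrier G" "y \<in> carrier G" "z \<in> carrier G" "w \<in> carrier G"
    and "x \<otimes> y = z \<otimes> w" "y \<otimes> w = w \<otimes> y"
  shows "x \<otimes> inv w = z \<otimes> inv y"
proof -
  have "w \<otimes> inv y = inv y \<otimes> (y \<otimes> w) \<otimes> inv y" using assms(1-4) by (simp add: m_assoc)
  also have "\<dots> = inv y \<otimes> w" using assms(1-4,6) by (simp add: m_assoc)
  finally have wy: "w \<otimes> inv y = inv y \<otimes> w" .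
  have "x = z \<otimes> w \<otimes> inv y" using assms(1-5) by (metis inv_solve_right m_closed)
  then have "x \<otimes> inv w = z \<otimes> (w \<otimes> inv y) \<otimes> inv w" using assms by (simp add: m_assoc)
  then show ?thesis using wy assms by (simp add: m_assoc)
qed

lemma normal_rcos_inv_mult_cong:
  assumes "N \<lhd> G" "u \<in> carrier G" "v \<in> carrier G" "x \<in> carrier G" "N #> u = N #> v"
  shows "N #> (inv u \<otimes> x) = N #> (inv v \<otimes> x)"
  using normal_rcos_cong[OF assms(1) one_closed _ _ assms(4) normal_rcos_inv_cong[OF assms(1-3,5)]] assms(2-4)
  by simp

lemma normal_rcos_nat_pow_commute:
  assumes "N \<lhd> G" "v \<in> carrier G" "w \<in> carrier G" "N #> (v \<otimes> w) = N #> (w \<otimes> v)"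
  shows "N #> (v [^] (m::nat) \<otimes> (inv v \<otimes> w) [^] m) = N #> (w [^] m)"
proof -
  interpret Q: group "G Mod N" using normal.factorgroup_is_group[OF assms(1)] .
  interpret phi: group_hom G "G Mod N" "\<lambda>x. N #> x" using normal_rcos_group_hom[OF assms(1)] .
  define V where "V = N #> v"
  define W where "W = N #> w"
  have VW: "V \<in> carrier (G Mod N)" "W \<in> carrier (G Mod N)" unfolding V_def W_def using assms by simp_all
  have comm: "V \<otimes>\<^bsub>G Mod N\<^esub> W = W \<otimes>\<^bsub>G Mod N\<^esub> V" unfolding V_def W_def using assms by simp
  have "inv\<^bsub>G Mod N\<^esub> V \<otimes>\<^bsub>G Mod N\<^esub> W
      = inv\<^bsub>G Mod N\<^esub> V \<otimes>\<^bsub>G Mod N\<^esub> (W \<otimes>\<^bsub>G Mod N\<^esub> V) \<otimes>\<^bsub>G Mod N\<^esub> inv\<^bsub>G Mod N\<^esub> V"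
    using VW by (simp add: Q.m_assoc)
  also have "\<dots> = W \<otimes>\<^bsub>G Mod N\<^esub> inv\<^bsub>G Mod N\<^esub> V"
    unfolding comm[symmetric] using VW by (simp add: Q.m_assoc)
  finally have "(inv\<^bsub>G Mod N\<^esub> V \<otimes>\<^bsub>G Mod N\<^esub> W) [^]\<^bsub>G Mod N\<^esub> m
      = inv\<^bsub>G Mod N\<^esub> V [^]\<^bsub>G Mod N\<^esub> m \<otimes>\<^bsub>G Mod N\<^esub> W [^]\<^bsub>G Mod N\<^esub> m"
    using VW by (intro Q.pow_mult_distrib) simp_all
  then have "V [^]\<^bsub>G Mod N\<^esub> m \<otimes>\<^bsub>G Mod N\<^esub> (inv\<^bsub>G Mod N\<^esub> V \<otimes>\<^bsub>G Mod N\<^esub> W) [^]\<^bsub>G Mod N\<^esub> m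
      = W [^]\<^bsub>G Mod N\<^esub> m"
    using VW by (simp add: Q.nat_pow_inv Q.m_assoc[symmetric])
  then show ?thesis unfolding V_def W_def using assms by (simp add: phi.hom_nat_pow)
qed

lemma rcos_eq_subgroup_mem:
  assumes "subgroup K G" "subgroup H G" "K \<subseteq> H" "x \<in> carrier G" "y \<in> H" "K #> x = K #> y"
  shows "x \<in> H"
proof -
  have yG: "y \<in> carrier G" using subgroup.mem_carrier[OF assms(2,5)] .
  have "x \<otimes> inv y \<in> H" using subgroup_rcos_eq_iff[OF assms(1,4) yG] assms(3,6) by auto
  then have "x \<otimes> inv y \<otimes> y \<in> H" using assms(5) subgroup.m_closed[OF assms(2)] by blast
  then show ?thesis using assms(4) yG by (simp add: m_assoc)
qed

end

section \<open>Maps compatible with a chain of normal subgroups\<close>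

text \<open>An abstraction of the top layers of the retraction filtration of a solution with regular
  permutation group; \<open>f\<close> plays the role of \<open>x \<mapsto> \<sigma>\<^sub>x\<close> transported to the group.\<close>

locale coset_pair = group G for G :: "('a, 'b) monoid_scheme" (structure) +
  fixes P A :: "'a set" and q r :: nat and f :: "'a \<Rightarrow> 'a"
  assumes finite_carrier: "finite (carrier G)"
    and P_normal: "P \<lhd> G" and A_normal: "A \<lhd> G" and P_sub_A: "P \<subseteq> A"
    and card_A: "card A = q * card P" and card_G: "card (carrier G) = r * card A"
    and coprime_qr: "coprime q r"
    and f_closed: "f \<in> carrier G \<rightarrow> carrier G"
    and f_sym: "\<And>a b. a \<in> carrier G \<Longrightarrow> b \<in> carrier G \<Longrightarrow>
      f a \<otimes> f (inv (f a) \<otimes> b) = f b \<otimes> f (inv (f b) \<otimes> a)"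
    and f_rcos_P: "\<And>a b. a \<in> carrier G \<Longrightarrow> b \<in> carrier G \<Longrightarrow>
      P #> f a = P #> f b \<longleftrightarrow> A #> a = A #> b"
    and f_rcos_A: "\<And>a b. a \<in> carrier G \<Longrightarrow> b \<in> carrier G \<Longrightarrow> A #> f a = A #> f b"
begin

lemma f_carrier [simp]: "a \<in> carrier G \<Longrightarrow> f a \<in> carrier G"
  using f_closed by blast

lemma P_subgroup: "subgroup P G"
  using normal_imp_subgroup[OF P_normal] .

lemma A_subgroup: "subgroup A G"
  using normal_imp_subgroup[OF A_normal] .

lemma rcos_P_f_inv_f_mult:
  assumes "a \<in> carrier G" "b \<in> carrier G" "b' \<in> carrier G"
  shows "P #> f (inv (f b) \<otimes> a) = P #> f (inv (f b') \<otimes> a)"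
proof -
  have "A #> f b = A #> f b'" using assms by (intro f_rcos_A) simp_all
  then have "A #> inv (f b) = A #> inv (f b')"
    using normal_rcos_inv_cong[OF A_normal] assms by simp
  then have "A #> (inv (f b) \<otimes> a) = A #> (inv (f b') \<otimes> a)"
    using normal_rcos_cong[OF A_normal one_closed _ _ assms(1)] assms by simp
  then show ?thesis using f_rcos_P assms by simp
qed

lemma rcos_P_f_shift:
  assumes comm: "\<And>a b. a \<in> carrier G \<Longrightarrow> b \<in> carrier G \<Longrightarrow> f a \<otimes> f b \<otimes> inv (f a) \<otimes> inv (f b) \<in> P"
    and a: "a \<in> carrier G" and a0: "a0 \<in> carrier G"
  shows "P #> f (inv (f a0) \<otimes> a) = P #> (inv (f a0 \<otimes> inv (f (inv (f a0) \<otimes> a0))) \<otimes> f a)"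
proof -
  interpret Q: group "G Mod P" using normal.factorgroup_is_group[OF P_normal] .
  interpret phi: group_hom G "G Mod P" "\<lambda>x. P #> x" using normal_rcos_group_hom[OF P_normal] .
  define F where "F a = P #> f a" for a
  define T where "T a = F (inv (f a0) \<otimes> a)" for a
  have FQ: "F a \<in> carrier (G Mod P)" if "a \<in> carrier G" for a unfolding F_def using that by simp
  have TQ: "T a \<in> carrier (G Mod P)" if "a \<in> carrier G" for a unfolding T_def using FQ a0 that by simp
  have F_comm: "F a \<otimes>\<^bsub>G Mod P\<^esub> F b = F b \<otimes>\<^bsub>G Mod P\<^esub> F a" if "a \<in> carrier G" "b \<in> carrier G" for a b
  proof (rule Q.commutator_eq_one_imp_commute[OF FQ[OF that(1)] FQ[OF that(2)]])
    have "F a \<otimes>\<^bsub>G Mod P\<^esub> F b \<otimes>\<^bsub>G Mod P\<^esub> inv\<^bsub>G Mod P\<^esub> (F a) \<otimes>\<^bsub>G Mod P\<^esub> inv\<^bsub>G Mod P\<^esub> (F b)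
        = P #> (f a \<otimes> f b \<otimes> inv (f a) \<otimes> inv (f b))"
      unfolding F_def using that by simp
    also have "\<dots> = P"
      using rcos_eq_self_iff[OF P_subgroup, of "f a \<otimes> f b \<otimes> inv (f a) \<otimes> inv (f b)"] comm[OF that] that
      by (simp del: phi.hom_mult phi.hom_inv)
    finally show "F a \<otimes>\<^bsub>G Mod P\<^esub> F b \<otimes>\<^bsub>G Mod P\<^esub> inv\<^bsub>G Mod P\<^esub> (F a) \<otimes>\<^bsub>G Mod P\<^esub> inv\<^bsub>G Mod P\<^esub> (F b) = \<one>\<^bsub>G Mod P\<^esub>"
      by (simp add: one_FactGroup)
  qed
  have F_shift: "F (inv (f b) \<otimes> a) = T a" if "a \<in> carrier G" "b \<in> carrier G" for a b
    unfolding F_def T_def using rcos_P_f_inv_f_mult that a0 by blast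
  have "P #> (f a \<otimes> f (inv (f a) \<otimes> a0)) = P #> (f a0 \<otimes> f (inv (f a0) \<otimes> a))"
    using f_sym[OF a a0] by simp
  then have "F a \<otimes>\<^bsub>G Mod P\<^esub> F (inv (f a) \<otimes> a0) = F a0 \<otimes>\<^bsub>G Mod P\<^esub> F (inv (f a0) \<otimes> a)"
    unfolding F_def using a a0 by simp
  then have "F a \<otimes>\<^bsub>G Mod P\<^esub> T a0 = F a0 \<otimes>\<^bsub>G Mod P\<^esub> T a"
    using F_shift[OF a0 a] unfolding T_def by simp
  then have "F a \<otimes>\<^bsub>G Mod P\<^esub> inv\<^bsub>G Mod P\<^esub> (T a) = F a0 \<otimes>\<^bsub>G Mod P\<^esub> inv\<^bsub>G Mod P\<^esub> (T a0)"
    using Q.mult_eq_imp_mult_inv_eq[OF FQ[OF a] TQ[OF a0] FQ[OF a0] TQ[OF a]] F_comm a a0 unfolding T_def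
    by simp
  then have "F a = (F a0 \<otimes>\<^bsub>G Mod P\<^esub> inv\<^bsub>G Mod P\<^esub> (T a0)) \<otimes>\<^bsub>G Mod P\<^esub> T a"
    using Q.inv_solve_right FQ TQ a a0 by (metis Q.inv_closed Q.m_closed)
  then have "T a = inv\<^bsub>G Mod P\<^esub> (F a0 \<otimes>\<^bsub>G Mod P\<^esub> inv\<^bsub>G Mod P\<^esub> (T a0)) \<otimes>\<^bsub>G Mod P\<^esub> F a"
    using Q.inv_solve_left FQ TQ a a0 by (metis Q.inv_closed Q.m_closed)
  then show ?thesis unfolding T_def F_def using a a0 by simp
qed

lemma rcos_P_f_pow_shift:
  assumes comm: "\<And>a b. a \<in> carrier G \<Longrightarrow> b \<in> carrier G \<Longrightarrow> f a \<otimes> f b \<otimes> inv (f a) \<otimes> inv (f b) \<in> P"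
    and a: "a \<in> carrier G" and a0: "a0 \<in> carrier G" and d: "d = f a0 \<otimes> inv (f (inv (f a0) \<otimes> a0))"
  shows "P #> f (inv (f a0) [^] (k::nat) \<otimes> a) = P #> (inv d [^] k \<otimes> f a)"
proof (induction k)
  case (Suc k)
  define c where "c = f a0"
  have cG: "c \<in> carrier G" and dG: "d \<in> carrier G" unfolding c_def d using a0 by simp_all
  have "P #> f (inv c [^] Suc k \<otimes> a) = P #> f (inv c \<otimes> (inv c [^] k \<otimes> a))"
    using nat_pow_Suc2 cG a by (simp add: m_assoc)
  also have "\<dots> = P #> (inv d \<otimes> f (inv c [^] k \<otimes> a))"
    using rcos_P_f_shift[OF comm _ a0] cG a unfolding c_def d by simp
  also have "\<dots> = P #> (inv d \<otimes> (inv d [^] k \<otimes> f a))"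
    using normal_rcos_mult_left_cong[OF P_normal _ _ _ Suc[folded c_def]] cG dG a by simp
  finally show ?case unfolding c_def using nat_pow_Suc2 dG a by (simp add: m_assoc)
qed (use a in simp)

text \<open>With \<open>c = f a0\<close>, the shift \<open>f (c\<^sup>-\<^sup>1 a) \<equiv> d\<^sup>-\<^sup>1 f a (mod P)\<close> iterated \<open>r = [G:A]\<close> times gives
  \<open>d\<^sup>r \<in> P\<close>, while \<open>d \<in> A\<close> gives \<open>d\<^sup>q \<in> P\<close>; so \<open>d \<in> P\<close>, and then \<open>c \<in> A\<close>.\<close>

lemma f_in_A_if_commutators_in_P:
  assumes comm: "\<And>a b. a \<in> carrier G \<Longrightarrow> b \<in> carrier G \<Longrightarrow> f a \<otimes> f b \<otimes> inv (f a) \<otimes> inv (f b) \<in> P"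
    and a0: "a0 \<in> carrier G"
  shows "f a0 \<in> A"
proof -
  define c where "c = f a0"
  define d where "d = c \<otimes> inv (f (inv c \<otimes> a0))"
  have cG: "c \<in> carrier G" and dG: "d \<in> carrier G" unfolding c_def d_def using a0 by simp_all
  have iter: "P #> f (inv c [^] k \<otimes> a) = P #> (inv d [^] k \<otimes> f a)"
    if "a \<in> carrier G" for a and k :: nat
    using rcos_P_f_pow_shift[OF comm that a0 d_def[unfolded c_def]] unfolding c_def .
  have "inv c [^] r \<in> A"
    using nat_pow_index_mem[OF A_normal subgroup_self subgroup.subset[OF A_subgroup] finite_carrier card_G] cG
    by (simp add: nat_pow_inv[symmetric])
  then have "A #> (inv c [^] r \<otimes> a0) = A #> a0"
    using subgroup_rcos_eq_iff[OF A_subgroup] cG a0 by (simp add: m_assoc)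
  then have "P #> f (inv c [^] r \<otimes> a0) = P #> f a0"
    using f_rcos_P cG a0 by simp
  then have "P #> (inv d [^] r \<otimes> f a0) = P #> f a0"
    using iter[OF a0, of r] by simp
  then have "inv d [^] r \<in> P"
    using subgroup_rcos_eq_iff[OF P_subgroup] dG a0 by (simp add: m_assoc)
  then have dr: "d [^] r \<in> P"
    using subgroup.m_inv_closed[OF P_subgroup] dG by (metis inv_inv nat_pow_closed nat_pow_inv)
  have "A #> f a0 = A #> f (inv c \<otimes> a0)" using cG a0 by (intro f_rcos_A) simp_all
  then have "d \<in> A"
    unfolding d_def c_def using subgroup_rcos_eq_iff[OF A_subgroup, of "f a0" "f (inv (f a0) \<otimes> a0)"] a0
    by simp
  then have "d [^] q \<in> P" by (rule nat_pow_index_mem[OF P_normal A_subgroup P_sub_A finite_carrier card_A])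
  moreover have "q > 0"
    using card_A card_subgroup_gt_0[OF finite_carrier A_subgroup] by simp
  ultimately have "d \<in> P" using coprime_nat_pow_mem[OF P_subgroup dG coprime_qr] dr by blast
  then have "P #> (inv d \<otimes> f a0) = P #> f a0"
    using subgroup_rcos_eq_iff[OF P_subgroup] subgroup.m_inv_closed[OF P_subgroup] dG a0
    by (simp add: m_assoc)
  moreover have "P #> f (inv c \<otimes> a0) = P #> (inv d \<otimes> f a0)"
    using rcos_P_f_shift[OF comm a0 a0] unfolding c_def d_def .
  ultimately have "A #> (inv c \<otimes> a0) = A #> a0"
    using f_rcos_P[of "inv c \<otimes> a0" a0] cG a0 by simp
  then have "inv c \<in> A" using subgroup_rcos_eq_iff[OF A_subgroup] cG a0 by (simp add: m_assoc)
  then have "inv (inv c) \<in> A" by (rule subgroup.m_inv_closed[OF A_subgroup])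
  then show ?thesis using cG unfolding c_def by simp
qed

end

locale coset_chain = coset_pair +
  fixes K :: "'a set" and p :: nat
  assumes K_normal: "K \<lhd> G" and K_sub_P: "K \<subseteq> P" and card_P: "card P = p * card K"
    and prime_p: "prime p" and coprime_pq: "coprime p q"
    and f_rcos_K: "\<And>a b. a \<in> carrier G \<Longrightarrow> b \<in> carrier G \<Longrightarrow>
      K #> f a = K #> f b \<longleftrightarrow> P #> a = P #> b"
begin

lemma K_subgroup: "subgroup K G"
  using normal_imp_subgroup[OF K_normal] .

definition twisted :: "'a \<Rightarrow> bool" where
  "twisted g \<longleftrightarrow> g \<in> carrier G \<and> (\<forall>b0\<in>carrier G. \<exists>\<rho>\<in>carrier G. \<forall>b\<in>carrier G.
      A #> b = A #> b0 \<longrightarrow> K #> f (g \<otimes> b) = K #> (g \<otimes> f b \<otimes> \<rho>))"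

lemma twistedD:
  assumes "twisted g" "b0 \<in> carrier G"
  obtains \<rho> where "\<rho> \<in> carrier G"
    "\<And>b. b \<in> carrier G \<Longrightarrow> A #> b = A #> b0 \<Longrightarrow> K #> f (g \<otimes> b) = K #> (g \<otimes> f b \<otimes> \<rho>)"
  using assms unfolding twisted_def by meson

lemma twisted_mult:
  assumes "twisted g1" "twisted g2"
  shows "twisted (g1 \<otimes> g2)"
  unfolding twisted_def
proof (intro conjI ballI)
  have g1: "g1 \<in> carrier G" and g2: "g2 \<in> carrier G" using assms unfolding twisted_def by auto
  then show "g1 \<otimes> g2 \<in> carrier G" by simp
  fix b0 assume b0: "b0 \<in> carrier G"
  obtain \<rho>2 where \<rho>2: "\<rho>2 \<in> carrier G"
    "\<And>b. b \<in> carrier G \<Longrightarrow> A #> b = A #> b0 \<Longrightarrow> K #> f (g2 \<otimes> b) = K #> (g2 \<otimes> f b \<otimes> \<rho>2)"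
    using twistedD[OF assms(2) b0] by blast
  obtain \<rho>1 where \<rho>1: "\<rho>1 \<in> carrier G"
    "\<And>b. b \<in> carrier G \<Longrightarrow> A #> b = A #> (g2 \<otimes> b0) \<Longrightarrow> K #> f (g1 \<otimes> b) = K #> (g1 \<otimes> f b \<otimes> \<rho>1)"
    using twistedD[OF assms(1)] g2 b0 by (metis m_closed)
  show "\<exists>\<rho>\<in>carrier G. \<forall>b\<in>carrier G. A #> b = A #> b0 \<longrightarrow>
      K #> f (g1 \<otimes> g2 \<otimes> b) = K #> (g1 \<otimes> g2 \<otimes> f b \<otimes> \<rho>)"
  proof (intro bexI ballI impI)
    fix b assume b: "b \<in> carrier G" "A #> b = A #> b0"
    have "A #> (g2 \<otimes> b) = A #> (g2 \<otimes> b0)"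
      using normal_rcos_mult_left_cong[OF A_normal g2 b(1) b0 b(2)] .
    then have "K #> f (g1 \<otimes> g2 \<otimes> b) = K #> (g1 \<otimes> f (g2 \<otimes> b) \<otimes> \<rho>1)"
      using \<rho>1(2) g1 g2 b by (simp add: m_assoc)
    also have "\<dots> = K #> (g1 \<otimes> (g2 \<otimes> f b \<otimes> \<rho>2) \<otimes> \<rho>1)"
      using normal_rcos_cong[OF K_normal g1 _ _ \<rho>1(1)] \<rho>2 g2 b by simp
    finally show "K #> f (g1 \<otimes> g2 \<otimes> b) = K #> (g1 \<otimes> g2 \<otimes> f b \<otimes> (\<rho>2 \<otimes> \<rho>1))"
      using g1 g2 b \<rho>1(1) \<rho>2(1) by (simp add: m_assoc)
  qed (use \<rho>1 \<rho>2 in simp)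
qed

lemma twisted_f:
  assumes x: "x \<in> carrier G"
  shows "twisted (f x)"
  unfolding twisted_def
proof (intro conjI ballI)
  show "f x \<in> carrier G" using x by simp
  fix b0 assume b0: "b0 \<in> carrier G"
  show "\<exists>\<rho>\<in>carrier G. \<forall>b\<in>carrier G. A #> b = A #> b0 \<longrightarrow> K #> f (f x \<otimes> b) = K #> (f x \<otimes> f b \<otimes> \<rho>)"
  proof (intro bexI ballI impI)
    fix b assume b: "b \<in> carrier G" "A #> b = A #> b0"
    define z where "z = f (inv (f (f x \<otimes> b)) \<otimes> x)"
    have zG: "z \<in> carrier G" unfolding z_def using x b by simp
    have "f x \<otimes> f b = f (f x \<otimes> b) \<otimes> z"
      using f_sym[of x "f x \<otimes> b"] x b unfolding z_def by simp
    then have fxb: "f (f x \<otimes> b) = f x \<otimes> f b \<otimes> inv z"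
      using inv_solve_right[of "f (f x \<otimes> b)" "f x \<otimes> f b" z] x b zG by simp
    have "A #> (f x \<otimes> b) = A #> (f x \<otimes> b0)"
      using normal_rcos_mult_left_cong[OF A_normal _ b(1) b0 b(2)] x by simp
    then have "P #> f (f x \<otimes> b) = P #> f (f x \<otimes> b0)" using f_rcos_P x b b0 by simp
    then have "P #> (inv (f (f x \<otimes> b)) \<otimes> x) = P #> (inv (f (f x \<otimes> b0)) \<otimes> x)"
      using normal_rcos_inv_mult_cong[OF P_normal _ _ x] x b b0 by simp
    then have "K #> z = K #> f (inv (f (f x \<otimes> b0)) \<otimes> x)"
      unfolding z_def using f_rcos_K x b b0 by simp
    then have "K #> inv z = K #> inv (f (inv (f (f x \<otimes> b0)) \<otimes> x))"
      using normal_rcos_inv_cong[OF K_normal zG] x b0 by simp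
    then show "K #> f (f x \<otimes> b) = K #> (f x \<otimes> f b \<otimes> inv (f (inv (f (f x \<otimes> b0)) \<otimes> x)))"
      unfolding fxb using normal_rcos_mult_left_cong[OF K_normal] x b b0 zG by simp
  qed (use x b0 in simp)
qed

lemma twisted_inv_f:
  assumes x: "x \<in> carrier G"
  shows "twisted (inv (f x))"
  unfolding twisted_def
proof (intro conjI ballI)
  show "inv (f x) \<in> carrier G" using x by simp
  fix b0 assume b0: "b0 \<in> carrier G"
  show "\<exists>\<rho>\<in>carrier G. \<forall>b\<in>carrier G. A #> b = A #> b0 \<longrightarrow>
      K #> f (inv (f x) \<otimes> b) = K #> (inv (f x) \<otimes> f b \<otimes> \<rho>)"
  proof (intro bexI ballI impI)
    fix b assume b: "b \<in> carrier G" "A #> b = A #> b0"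
    have fxb: "f (inv (f x) \<otimes> b) = inv (f x) \<otimes> f b \<otimes> f (inv (f b) \<otimes> x)"
      using f_sym[OF x b(1)] inv_solve_left[of "f (inv (f x) \<otimes> b)" "f x" "f b \<otimes> f (inv (f b) \<otimes> x)"] x b
      by (simp add: m_assoc)
    have "P #> f b = P #> f b0" using f_rcos_P b b0 by simp
    then have "P #> (inv (f b) \<otimes> x) = P #> (inv (f b0) \<otimes> x)"
      using normal_rcos_inv_mult_cong[OF P_normal _ _ x] b b0 by simp
    then have "K #> f (inv (f b) \<otimes> x) = K #> f (inv (f b0) \<otimes> x)"
      using f_rcos_K x b b0 by simp
    then show "K #> f (inv (f x) \<otimes> b) = K #> (inv (f x) \<otimes> f b \<otimes> f (inv (f b0) \<otimes> x))"
      unfolding fxb using normal_rcos_mult_left_cong[OF K_normal] x b b0 by simp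
  qed (use x b0 in simp)
qed

lemma f_commutator_in_A:
  assumes "a \<in> carrier G" "b \<in> carrier G"
  shows "f a \<otimes> f b \<otimes> inv (f a) \<otimes> inv (f b) \<in> A"
proof -
  interpret phi: group_hom G "G Mod A" "\<lambda>x. A #> x" using normal_rcos_group_hom[OF A_normal] .
  have "A #> f a = A #> f b" using assms by (intro f_rcos_A)
  then have "A #> (f a \<otimes> f b \<otimes> inv (f a) \<otimes> inv (f b)) = \<one>\<^bsub>G Mod A\<^esub>"
    using assms by (simp add: phi.H.m_assoc)
  then show ?thesis
    using rcos_eq_self_iff[OF A_subgroup, of "f a \<otimes> f b \<otimes> inv (f a) \<otimes> inv (f b)"] assms
    unfolding one_FactGroup by simp
qed

lemma twisted_nat_pow_rcos:
  assumes "twisted w" "w \<in> A"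
  obtains \<rho> where "\<rho> \<in> carrier G" "\<And>m::nat. K #> f (w [^] m) = K #> (w [^] m \<otimes> f \<one> \<otimes> \<rho> [^] m)"
proof -
  have wG: "w \<in> carrier G" using assms(1) unfolding twisted_def by simp
  obtain \<rho> where \<rho>: "\<rho> \<in> carrier G"
    "\<And>b. b \<in> carrier G \<Longrightarrow> A #> b = A #> \<one> \<Longrightarrow> K #> f (w \<otimes> b) = K #> (w \<otimes> f b \<otimes> \<rho>)"
    using twistedD[OF assms(1) one_closed] by blast
  have "K #> f (w [^] m) = K #> (w [^] m \<otimes> f \<one> \<otimes> \<rho> [^] m)" for m :: nat
  proof (induction m)
    case (Suc m)
    have wm: "w [^] m \<in> A" using subgroup_nat_pow_closed[OF A_subgroup assms(2)] .
    then have "A #> w [^] m = A" using rcos_eq_self_iff[OF A_subgroup] wG by simp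
    then have "A #> w [^] m = A #> \<one>" using coset_mult_one[OF subgroup.subset[OF A_subgroup]] by simp
    then have "K #> f (w \<otimes> w [^] m) = K #> (w \<otimes> f (w [^] m) \<otimes> \<rho>)" using \<rho> wG by simp
    also have "\<dots> = K #> (w \<otimes> (w [^] m \<otimes> f \<one> \<otimes> \<rho> [^] m) \<otimes> \<rho>)"
      using normal_rcos_cong[OF K_normal _ _ _ \<rho>(1) Suc] wG \<rho>(1) by simp
    moreover have "w [^] Suc m = w \<otimes> w [^] m" using nat_pow_Suc2 wG by simp
    ultimately show ?case using wG \<rho>(1) by (simp only: nat_pow_Suc[of \<rho>]) (simp add: m_assoc)
  qed simp
  then show ?thesis using that \<rho>(1) by blast
qed

lemma f_commutator_rcos_nat_pow:
  assumes a1: "a1 \<in> carrier G" and b1: "b1 \<in> carrier G"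
  obtains \<pi> where "\<pi> \<in> P" "\<And>m::nat. K #> (inv (f \<one>) \<otimes> f ((f a1 \<otimes> f b1 \<otimes> inv (f a1) \<otimes> inv (f b1)) [^] m))
    = K #> \<pi> [^] m"
proof -
  define w where "w = f a1 \<otimes> f b1 \<otimes> inv (f a1) \<otimes> inv (f b1)"
  have wG: "w \<in> carrier G" unfolding w_def using a1 b1 by simp
  have wA: "w \<in> A" unfolding w_def using f_commutator_in_A[OF a1 b1] .
  have "twisted w" unfolding w_def using twisted_mult twisted_f twisted_inv_f a1 b1 by simp
  then obtain \<rho> where \<rho>: "\<rho> \<in> carrier G" "\<And>m::nat. K #> f (w [^] m) = K #> (w [^] m \<otimes> f \<one> \<otimes> \<rho> [^] m)"
    using twisted_nat_pow_rcos wA by blast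
  define g0 where "g0 = f \<one>"
  define v where "v = inv g0 \<otimes> w \<otimes> g0"
  define \<pi> where "\<pi> = v \<otimes> \<rho>"
  have g0G: "g0 \<in> carrier G" and vG: "v \<in> carrier G" and \<pi>G: "\<pi> \<in> carrier G"
    unfolding \<pi>_def v_def g0_def using wG \<rho>(1) by simp_all
  have "A #> w = A #> \<one>"
    using rcos_eq_self_iff[OF A_subgroup wG] wA coset_mult_one[OF subgroup.subset[OF A_subgroup]] by simp
  then have "P #> g0 = P #> f w" using f_rcos_P wG unfolding g0_def by simp
  then have g0_w_P: "inv g0 \<otimes> f w \<in> P" using normal_rcos_eq_iff[OF P_normal g0G] wG by simp
  have "K #> f w = K #> (w \<otimes> g0 \<otimes> \<rho>)" using \<rho>(2)[of 1] wG \<rho>(1) unfolding g0_def by simp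
  then have "K #> (inv g0 \<otimes> f w) = K #> \<pi>"
    using normal_rcos_mult_left_cong[OF K_normal inv_closed[OF g0G]] wG g0G \<rho>(1)
    unfolding \<pi>_def v_def by (simp add: m_assoc)
  then have \<pi>P: "\<pi> \<in> P" using rcos_eq_subgroup_mem[OF K_subgroup P_subgroup K_sub_P \<pi>G g0_w_P] by simp
  have v_\<pi>_comm: "K #> (v \<otimes> \<pi>) = K #> (\<pi> \<otimes> v)"
  proof -
    define x where "x = inv g0 \<otimes> f a1 \<otimes> g0"
    define y where "y = inv g0 \<otimes> f b1 \<otimes> g0"
    have xy: "x \<in> carrier G" "y \<in> carrier G" unfolding x_def y_def using g0G a1 b1 by simp_all
    have "v = x \<otimes> y \<otimes> inv x \<otimes> inv y"
      unfolding v_def w_def x_def y_def using a1 b1 g0G by (simp add: m_assoc inv_mult_group)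
    then show ?thesis
      using prime_index_commutator_rcos_commute[OF K_normal P_normal K_sub_P finite_carrier card_P prime_p xy \<pi>P]
      by simp
  qed
  have "K #> (inv g0 \<otimes> f (w [^] m)) = K #> (\<pi> [^] m)" for m :: nat
  proof -
    have "K #> (inv g0 \<otimes> f (w [^] m)) = K #> (inv g0 \<otimes> (w [^] m \<otimes> g0 \<otimes> \<rho> [^] m))"
      using normal_rcos_mult_left_cong[OF K_normal _ _ _ \<rho>(2)] wG g0G \<rho>(1) unfolding g0_def by simp
    also have "inv g0 \<otimes> (w [^] m \<otimes> g0 \<otimes> \<rho> [^] m) = (inv g0 \<otimes> w [^] m \<otimes> g0) \<otimes> \<rho> [^] m"
      using wG g0G \<rho>(1) by (simp add: m_assoc)
    also have "inv g0 \<otimes> w [^] m \<otimes> g0 = v [^] m"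
      using conj_nat_pow[OF inv_closed[OF g0G] wG, of m] g0G unfolding v_def by simp
    also have "\<rho> = inv v \<otimes> \<pi>" unfolding \<pi>_def using vG \<rho>(1) by (simp add: m_assoc[symmetric])
    finally show ?thesis
      using normal_rcos_nat_pow_commute[OF K_normal vG \<pi>G v_\<pi>_comm] by simp
  qed
  then show ?thesis using that \<pi>P unfolding w_def g0_def by blast
qed

text \<open>Here \<open>w\<^sup>q \<in> P\<close> forces \<open>\<pi>\<^sup>q \<in> K\<close>; with \<open>\<pi>\<^sup>p \<in> K\<close> and \<open>gcd p q = 1\<close> this gives \<open>\<pi> \<in> K\<close>,
  i.e. \<open>f w\<close> and \<open>f \<one>\<close> agree modulo \<open>K\<close>, so \<open>w \<in> P\<close>.\<close>

lemma f_commutator_in_P: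
  assumes a1: "a1 \<in> carrier G" and b1: "b1 \<in> carrier G"
  shows "f a1 \<otimes> f b1 \<otimes> inv (f a1) \<otimes> inv (f b1) \<in> P"
proof -
  define w where "w = f a1 \<otimes> f b1 \<otimes> inv (f a1) \<otimes> inv (f b1)"
  have wG: "w \<in> carrier G" unfolding w_def using a1 b1 by simp
  define g0 where "g0 = f \<one>"
  have g0G: "g0 \<in> carrier G" unfolding g0_def by simp
  obtain \<pi> where \<pi>P: "\<pi> \<in> P" and w_rcos: "\<And>m::nat. K #> (inv g0 \<otimes> f (w [^] m)) = K #> \<pi> [^] m"
    using f_commutator_rcos_nat_pow[OF a1 b1] unfolding w_def g0_def by blast
  have \<pi>G: "\<pi> \<in> carrier G" using subgroup.mem_carrier[OF P_subgroup \<pi>P] .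
  have "w [^] q \<in> P"
    using nat_pow_index_mem[OF P_normal A_subgroup P_sub_A finite_carrier card_A] f_commutator_in_A[OF a1 b1]
    unfolding w_def .
  then have "P #> w [^] q = P" using rcos_eq_self_iff[OF P_subgroup] wG by simp
  then have "P #> w [^] q = P #> \<one>" using coset_mult_one[OF subgroup.subset[OF P_subgroup]] by simp
  then have "K #> f (w [^] q) = K #> g0" using f_rcos_K wG unfolding g0_def by simp
  then have "K #> (inv g0 \<otimes> f (w [^] q)) = K #> (inv g0 \<otimes> g0)"
    using normal_rcos_mult_left_cong[OF K_normal inv_closed[OF g0G]] wG g0G by simp
  then have "K #> \<pi> [^] q = K"
    using w_rcos[of q] g0G coset_mult_one[OF subgroup.subset[OF K_subgroup]] by simp
  then have "\<pi> [^] q \<in> K" using rcos_eq_self_iff[OF K_subgroup] \<pi>G by simp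
  moreover have "\<pi> [^] p \<in> K"
    using nat_pow_index_mem[OF K_normal P_subgroup K_sub_P finite_carrier card_P \<pi>P] .
  ultimately have "\<pi> \<in> K"
    using coprime_nat_pow_mem[OF K_subgroup \<pi>G coprime_pq prime_gt_0_nat[OF prime_p]] by blast
  then have "K #> (inv g0 \<otimes> f w) = K"
    using w_rcos[of 1] rcos_eq_self_iff[OF K_subgroup \<pi>G] wG \<pi>G by simp
  then have "inv g0 \<otimes> f w \<in> K" using rcos_eq_self_iff[OF K_subgroup] g0G wG by simp
  then have "K #> f \<one> = K #> f w" using normal_rcos_eq_iff[OF K_normal g0G] wG unfolding g0_def by simp
  then have "P #> w = P #> \<one>" using f_rcos_K wG by simp
  then have "P #> w = P" using coset_mult_one[OF subgroup.subset[OF P_subgroup]] by simp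
  then show ?thesis using rcos_eq_self_iff[OF P_subgroup wG] unfolding w_def by simp
qed

lemma f_in_A: "a \<in> carrier G \<Longrightarrow> f a \<in> A"
  using f_in_A_if_commutators_in_P f_commutator_in_P by blast

end

section \<open>Retractions of finite solutions\<close>

locale finite_solution =
  fixes X :: "'a set" and r :: "'a \<times> 'a \<Rightarrow> 'a \<times> 'a"
  assumes solution: "ybe_solution X r" and finite_X: "finite X"
begin

abbreviation \<sigma> :: "'a \<Rightarrow> 'a \<Rightarrow> 'a" where "\<sigma> x \<equiv> ybe_sigma r x"
abbreviation \<sigma>_inv :: "'a \<Rightarrow> 'a \<Rightarrow> 'a" where "\<sigma>_inv x \<equiv> inv_into X (ybe_sigma r x)"
abbreviation ret :: "nat \<Rightarrow> ('a \<times> 'a) set" where "ret k \<equiv> ret_rel X r k"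

lemma \<sigma>_bij: "x \<in> X \<Longrightarrow> bij_betw (\<sigma> x) X X"
  using solution unfolding ybe_solution_def by blast

lemma \<sigma>_closed [simp]: "x \<in> X \<Longrightarrow> y \<in> X \<Longrightarrow> \<sigma> x y \<in> X"
  using \<sigma>_bij bij_betwE by blast

lemma \<sigma>_inv_closed [simp]: "x \<in> X \<Longrightarrow> y \<in> X \<Longrightarrow> \<sigma>_inv x y \<in> X"
  using \<sigma>_bij by (metis bij_betw_def inv_into_into)

lemma \<sigma>_\<sigma>_inv [simp]: "x \<in> X \<Longrightarrow> y \<in> X \<Longrightarrow> \<sigma> x (\<sigma>_inv x y) = y"
  using \<sigma>_bij by (metis bij_betw_def f_inv_into_f)

lemma \<sigma>_inv_\<sigma> [simp]: "x \<in> X \<Longrightarrow> y \<in> X \<Longrightarrow> \<sigma>_inv x (\<sigma> x y) = y"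
  using \<sigma>_bij by (metis bij_betw_def inv_into_f_f)

lemma \<gamma>_closed: "x \<in> X \<Longrightarrow> y \<in> X \<Longrightarrow> ybe_gamma r y x \<in> X"
  using solution unfolding ybe_solution_def ybe_gamma_def by (metis mem_Sigma_iff prod.collapse)

lemma \<sigma>_braid:
  assumes "x \<in> X" "y \<in> X" "z \<in> X"
  shows "\<sigma> (\<sigma> x y) (\<sigma> (ybe_gamma r y x) z) = \<sigma> x (\<sigma> y z)"
proof -
  define r12 where "r12 = (\<lambda>(a, b, c :: 'a). (fst (r (a, b)), snd (r (a, b)), c))"
  define r23 where "r23 = (\<lambda>(a :: 'a, b, c). (a, fst (r (b, c)), snd (r (b, c))))"
  have "r12 (r23 (r12 (x, y, z))) = r23 (r12 (r23 (x, y, z)))"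
    using solution assms unfolding ybe_solution_def r12_def r23_def Let_def by blast
  then have "fst (r12 (r23 (r12 (x, y, z)))) = fst (r23 (r12 (r23 (x, y, z))))" by simp
  then show ?thesis unfolding r12_def r23_def ybe_sigma_def ybe_gamma_def by (simp add: case_prod_beta)
qed

lemma \<gamma>_eq:
  assumes "x \<in> X" "y \<in> X"
  shows "ybe_gamma r y x = \<sigma>_inv (\<sigma> x y) x"
proof -
  have "r (\<sigma> x y, ybe_gamma r y x) = (x, y)"
    using solution assms unfolding ybe_solution_def ybe_sigma_def ybe_gamma_def by simp
  then have "\<sigma> (\<sigma> x y) (ybe_gamma r y x) = x" unfolding ybe_sigma_def by simp
  then show ?thesis using \<sigma>_inv_\<sigma> \<gamma>_closed assms by (metis \<sigma>_closed)
qed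

text \<open>The braid relation for \<open>\<sigma>\<close>, with \<open>\<gamma>\<close> eliminated by involutivity; this is the
  cycle set identity.\<close>

lemma \<sigma>_\<sigma>_inv_sym:
  assumes "x \<in> X" "y \<in> X" "z \<in> X"
  shows "\<sigma> x (\<sigma> (\<sigma>_inv x y) z) = \<sigma> y (\<sigma> (\<sigma>_inv y x) z)"
proof -
  have u: "\<sigma>_inv x y \<in> X" using assms by simp
  have "\<sigma> x (\<sigma> (\<sigma>_inv x y) z) = \<sigma> (\<sigma> x (\<sigma>_inv x y)) (\<sigma> (ybe_gamma r (\<sigma>_inv x y) x) z)"
    using \<sigma>_braid[OF assms(1) u assms(3)] by simp
  also have "\<dots> = \<sigma> y (\<sigma> (\<sigma>_inv y x) z)"
    using \<gamma>_eq[OF assms(1) u] assms by simp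
  finally show ?thesis .
qed

lemma ret_subset: "ret k \<subseteq> X \<times> X"
  by (induction k) auto

lemma ret_refl: "x \<in> X \<Longrightarrow> (x, x) \<in> ret k"
  by (induction k arbitrary: x) auto

lemma ret_sym: "(x, y) \<in> ret k \<Longrightarrow> (y, x) \<in> ret k"
  by (induction k arbitrary: x y) auto

lemma ret_trans: "(x, y) \<in> ret k \<Longrightarrow> (y, z) \<in> ret k \<Longrightarrow> (x, z) \<in> ret k"
proof (induction k arbitrary: x y z)
  case (Suc k) then show ?case by simp blast
qed auto

lemma ret_equiv: "equiv X (ret k)"
  unfolding equiv_def refl_on_def sym_def trans_def
  using ret_subset ret_refl ret_sym ret_trans by blast

lemma ret_mono: "ret k \<subseteq> ret (Suc k)"
proof (induction k)
  case 0 show ?case using ret_refl by auto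
next
  case (Suc k) then show ?case by auto
qed

lemma ret_mono': "(x, y) \<in> ret k \<Longrightarrow> (x, y) \<in> ret (Suc k)"
  using ret_mono by blast

lemma ret_\<sigma>_inv_Suc:
  assumes inv: "\<And>x y a. (x, y) \<in> ret k \<Longrightarrow> a \<in> X \<Longrightarrow> (\<sigma>_inv a x, \<sigma>_inv a y) \<in> ret k"
    and fwd: "\<And>x y a. (x, y) \<in> ret k \<Longrightarrow> a \<in> X \<Longrightarrow> (\<sigma> a x, \<sigma> a y) \<in> ret k"
    and xy: "(x, y) \<in> ret (Suc k)" and a: "a \<in> X"
  shows "(\<sigma>_inv a x, \<sigma>_inv a y) \<in> ret (Suc k)"
proof -
  have xX: "x \<in> X" and yX: "y \<in> X" and xy_k: "\<And>z. z \<in> X \<Longrightarrow> (\<sigma> x z, \<sigma> y z) \<in> ret k"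
    using xy by auto
  have "(\<sigma> (\<sigma>_inv a x) w, \<sigma> (\<sigma>_inv a y) w) \<in> ret k" if w: "w \<in> X" for w
  proof -
    define u where "u = \<sigma>_inv x a"
    define u' where "u' = \<sigma>_inv y a"
    have uX: "u \<in> X" and u'X: "u' \<in> X" unfolding u_def u'_def using xX yX a by auto
    have "(a, \<sigma> y u) \<in> ret k" using xy_k[OF uX] xX a unfolding u_def by simp
    then have "(u', u) \<in> ret k" unfolding u'_def using inv[of a "\<sigma> y u" y] yX uX by simp
    then have "(u, u') \<in> ret (Suc k)" using ret_sym ret_mono' by blast
    then have "(\<sigma> x (\<sigma> u w), \<sigma> x (\<sigma> u' w)) \<in> ret k" using fwd xX w by simp
    moreover have "(\<sigma> x (\<sigma> u' w), \<sigma> y (\<sigma> u' w)) \<in> ret k" using xy_k u'X w by simp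
    ultimately have "(\<sigma> a (\<sigma> (\<sigma>_inv a x) w), \<sigma> a (\<sigma> (\<sigma>_inv a y) w)) \<in> ret k"
      using ret_trans \<sigma>_\<sigma>_inv_sym[OF a xX w] \<sigma>_\<sigma>_inv_sym[OF a yX w] unfolding u_def u'_def by metis
    then show ?thesis using inv[OF _ a] a xX yX w by fastforce
  qed
  then show ?thesis using xX yX a by simp
qed

text \<open>This is where finiteness of \<open>X\<close> is used.\<close>

lemma ret_\<sigma>_of_\<sigma>_inv:
  assumes inv: "\<And>x y. (x, y) \<in> ret k \<Longrightarrow> (\<sigma>_inv a x, \<sigma>_inv a y) \<in> ret k"
    and xy: "(x, y) \<in> ret k" and a: "a \<in> X"
  shows "(\<sigma> a x, \<sigma> a y) \<in> ret k"
proof -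
  define \<Phi> where "\<Phi> = (\<lambda>(u, v). (\<sigma>_inv a u, \<sigma>_inv a v))"
  have fin: "finite (ret k)" using ret_subset finite_X by (meson finite_SigmaI finite_subset)
  have "inj_on (\<sigma>_inv a) X" using bij_betw_inv_into[OF \<sigma>_bij[OF a]] bij_betw_def by blast
  then have "inj_on \<Phi> (ret k)" using ret_subset unfolding \<Phi>_def by (auto intro!: inj_onI dest: inj_onD)
  moreover have "\<Phi> ` ret k \<subseteq> ret k" unfolding \<Phi>_def using inv by auto
  ultimately have "\<Phi> ` ret k = ret k" using endo_inj_surj[OF fin] by blast
  then have "(x, y) \<in> \<Phi> ` ret k" using xy by simp
  then obtain x' y' where "(x', y') \<in> ret k" "\<sigma>_inv a x' = x" "\<sigma>_inv a y' = y"
    unfolding \<Phi>_def by auto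
  moreover then have "x' \<in> X" "y' \<in> X" using ret_subset by auto
  ultimately show ?thesis using a by auto
qed

lemma ret_\<sigma>_\<sigma>_inv:
  "(\<forall>x y a. (x, y) \<in> ret k \<longrightarrow> a \<in> X \<longrightarrow> (\<sigma>_inv a x, \<sigma>_inv a y) \<in> ret k) \<and>
   (\<forall>x y a. (x, y) \<in> ret k \<longrightarrow> a \<in> X \<longrightarrow> (\<sigma> a x, \<sigma> a y) \<in> ret k)"
proof (induction k)
  case 0 then show ?case by auto
next
  case (Suc k)
  then have inv: "(\<sigma>_inv a x, \<sigma>_inv a y) \<in> ret (Suc k)" if "(x, y) \<in> ret (Suc k)" "a \<in> X" for x y a
    using ret_\<sigma>_inv_Suc that by blast
  then show ?case using ret_\<sigma>_of_\<sigma>_inv by blast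
qed

lemma ret_\<sigma>_inv: "(x, y) \<in> ret k \<Longrightarrow> a \<in> X \<Longrightarrow> (\<sigma>_inv a x, \<sigma>_inv a y) \<in> ret k"
  using ret_\<sigma>_\<sigma>_inv by blast

lemma ret_\<sigma>: "(x, y) \<in> ret k \<Longrightarrow> a \<in> X \<Longrightarrow> (\<sigma> a x, \<sigma> a y) \<in> ret k"
  using ret_\<sigma>_\<sigma>_inv by blast

abbreviation BX where "BX \<equiv> BijGroup X"
abbreviation \<G> where "\<G> \<equiv> ybe_group X r"

definition \<sigma>_perm :: "'a \<Rightarrow> 'a \<Rightarrow> 'a" where "\<sigma>_perm x = restrict (\<sigma> x) X"

lemma ybe_group_eq: "\<G> = generate BX (\<sigma>_perm ` X)"
  unfolding ybe_group_def \<sigma>_perm_def by simp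

lemma \<sigma>_perm_apply [simp]: "z \<in> X \<Longrightarrow> \<sigma>_perm x z = \<sigma> x z"
  unfolding \<sigma>_perm_def by simp

lemma \<sigma>_perm_Bij: "x \<in> X \<Longrightarrow> \<sigma>_perm x \<in> Bij X"
  unfolding Bij_def \<sigma>_perm_def using \<sigma>_bij bij_betw_cong[of X "restrict (\<sigma> x) X" "\<sigma> x" X] by simp

lemma ybe_group_subgroup: "subgroup \<G> BX"
  unfolding ybe_group_eq using \<sigma>_perm_Bij
  by (intro group.generate_is_subgroup[OF group_BijGroup]) (auto simp: BijGroup_def)

lemma ybe_group_Bij: "g \<in> \<G> \<Longrightarrow> g \<in> Bij X"
  using subgroup.subset[OF ybe_group_subgroup] by (auto simp: BijGroup_def)

lemma \<sigma>_perm_in_ybe_group: "x \<in> X \<Longrightarrow> \<sigma>_perm x \<in> \<G>"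
  unfolding ybe_group_eq by (rule generate.incl) simp

lemma ybe_group_apply: "g \<in> \<G> \<Longrightarrow> x \<in> X \<Longrightarrow> g x \<in> X"
  using ybe_group_Bij Bij_imp_funcset by blast

lemma Bij_mult_apply: "g \<in> Bij X \<Longrightarrow> h \<in> Bij X \<Longrightarrow> x \<in> X \<Longrightarrow> (g \<otimes>\<^bsub>BX\<^esub> h) x = g (h x)"
  by (simp add: BijGroup_def compose_def)

lemma Bij_one_apply: "x \<in> X \<Longrightarrow> \<one>\<^bsub>BX\<^esub> x = x"
  by (simp add: BijGroup_def)

lemma Bij_inv_apply: "g \<in> Bij X \<Longrightarrow> x \<in> X \<Longrightarrow> (inv\<^bsub>BX\<^esub> g) x = inv_into X g x"
  by (simp add: inv_BijGroup)

lemma Bij_inv_apply_apply: "g \<in> Bij X \<Longrightarrow> x \<in> X \<Longrightarrow> (inv\<^bsub>BX\<^esub> g) (g x) = x"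
  using Bij_inv_apply Bij_imp_funcset Bij_def
  by (metis Int_iff PiE bij_betw_inv_into_left mem_Collect_eq)

lemma Bij_apply_inv_apply: "g \<in> Bij X \<Longrightarrow> x \<in> X \<Longrightarrow> g ((inv\<^bsub>BX\<^esub> g) x) = x"
  using Bij_inv_apply Bij_def by (metis Int_iff bij_betw_inv_into_right mem_Collect_eq)

lemma inv_\<sigma>_perm_apply: "a \<in> X \<Longrightarrow> z \<in> X \<Longrightarrow> (inv\<^bsub>BX\<^esub> (\<sigma>_perm a)) z = \<sigma>_inv a z"
proof -
  assume a: "a \<in> X" and z: "z \<in> X"
  have "(inv\<^bsub>BX\<^esub> (\<sigma>_perm a)) z = inv_into X (\<sigma>_perm a) z" using Bij_inv_apply \<sigma>_perm_Bij a z by simp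
  also have "\<dots> = \<sigma>_inv a z" unfolding inv_into_def \<sigma>_perm_def
    by (rule arg_cong[where f = Eps]) (auto simp: fun_eq_iff)
  finally show ?thesis .
qed

lemma ret_ybe_group: "g \<in> \<G> \<Longrightarrow> (x, y) \<in> ret k \<Longrightarrow> (g x, g y) \<in> ret k"
  unfolding ybe_group_eq
proof (induction g arbitrary: x y rule: generate.induct)
  case one then show ?case using ret_subset Bij_one_apply by (metis mem_Sigma_iff subsetD)
next
  case (incl h) then show ?case using ret_subset ret_\<sigma> by fastforce
next
  case (inv h)
  then obtain a where "a \<in> X" "h = \<sigma>_perm a" by blast
  then show ?case using inv.prems ret_subset inv_\<sigma>_perm_apply ret_\<sigma>_inv by (metis mem_Sigma_iff subsetD)
next
  case (eng h1 h2)
  have "h1 \<in> Bij X" "h2 \<in> Bij X" using eng.hyps ybe_group_Bij ybe_group_eq by auto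
  then show ?case using eng ret_subset Bij_mult_apply by (metis mem_Sigma_iff subsetD)
qed


lemma finite_ybe_group: "finite \<G>"
proof (rule finite_subset)
  show "\<G> \<subseteq> Pi\<^sub>E X (\<lambda>_. X)"
    using ybe_group_Bij Bij_imp_funcset Bij_imp_extensional unfolding PiE_def by blast
  show "finite (Pi\<^sub>E X (\<lambda>_. X))" using finite_X by (simp add: finite_PiE)
qed

lemma ybe_indecomposable_orbit:
  assumes "ybe_indecomposable X r" "x0 \<in> X"
  shows "(\<lambda>g. g x0) ` \<G> = X"
proof
  show "(\<lambda>g. g x0) ` \<G> \<subseteq> X" using ybe_group_apply assms(2) by blast
  show "X \<subseteq> (\<lambda>g. g x0) ` \<G>"
  proof
    fix y assume "y \<in> X"
    then obtain g where "g \<in> \<G>" "g x0 = y" using assms unfolding ybe_indecomposable_def by blast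
    then show "y \<in> (\<lambda>g. g x0) ` \<G>" by (metis image_eqI)
  qed
qed

lemma card_le_card_ybe_group:
  assumes "ybe_indecomposable X r" "x0 \<in> X"
  shows "card X \<le> card \<G>"
  using card_image_le[OF finite_ybe_group, of "\<lambda>g. g x0"] ybe_indecomposable_orbit[OF assms] by simp

lemma ybe_group_regular:
  assumes "ybe_indecomposable X r" "x0 \<in> X" "card \<G> \<le> card X"
  shows "inj_on (\<lambda>g. g x0) \<G>"
proof -
  have "card ((\<lambda>g. g x0) ` \<G>) = card \<G>"
    using ybe_indecomposable_orbit[OF assms(1,2)] card_le_card_ybe_group[OF assms(1,2)] assms(3) by simp
  then show ?thesis using eq_card_imp_inj_on[OF finite_ybe_group] by blast
qed

lemma ret_eq_top_iff: "ret k = X \<times> X \<longleftrightarrow> ret_card X r k = 1"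
proof
  assume "ret k = X \<times> X"
  then have "X // ret k = {X}" using solution unfolding ybe_solution_def quotient_def by auto
  then show "ret_card X r k = 1" unfolding ret_card_def by simp
next
  assume "ret_card X r k = 1"
  then obtain C where C: "X // ret k = {C}" unfolding ret_card_def using card_1_singletonE by blast
  have "(x, y) \<in> ret k" if "x \<in> X" "y \<in> X" for x y
  proof -
    have "ret k `` {x} = ret k `` {y}"
      using C quotientI[OF that(1), of "ret k"] quotientI[OF that(2), of "ret k"] by simp
    then show ?thesis using eq_equiv_class_iff[OF ret_equiv[of k] that] by simp
  qed
  then show "ret k = X \<times> X" using ret_subset by auto
qed

lemma ret_stable:
  assumes "ret k = ret (Suc k)"
  shows "ret (k + j) = ret k"
proof (induction j)
  case (Suc j)
  then have "ret (k + Suc j) = ret (Suc k)" by simp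
  then show ?case using assms by (rule trans[OF _ sym])
qed simp

lemma mp_level_ret:
  assumes "mp_level X r n" "card X \<ge> 2"
  shows "ret n = X \<times> X" and "\<And>k. k < n \<Longrightarrow> ret k \<noteq> ret (Suc k)"
proof -
  show top: "ret n = X \<times> X" using assms(1) ret_eq_top_iff unfolding mp_level_def by simp
  fix k assume k: "k < n"
  show "ret k \<noteq> ret (Suc k)"
  proof
    assume "ret k = ret (Suc k)"
    then have "ret k = X \<times> X" using ret_stable[of k "n - k"] top k by (simp del: ret_rel.simps)
    moreover have "ret 0 \<noteq> X \<times> X"
    proof
      obtain x y where "x \<in> X" "y \<in> X" "x \<noteq> y"
        using assms(2) card_le_Suc0_iff_eq[OF finite_X] by fastforce
      moreover assume "ret 0 = X \<times> X"
      ultimately show False by (auto simp: Id_on_def)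
    qed
    ultimately show False using assms(1) ret_eq_top_iff k unfolding mp_level_def
      by (metis less_one not_less)
  qed
qed

end

section \<open>Solutions with regular permutation group\<close>

text \<open>When \<open>\<G>\<close> acts regularly, \<open>g \<mapsto> g x0\<close> identifies \<open>\<G>\<close> with \<open>X\<close>; transported along it,
  \<open>x \<mapsto> \<sigma>_x\<close> becomes the map \<open>\<sigma>_of\<close> on \<open>\<G>\<close>, and the retraction filtration becomes the
  chains of subgroups \<open>ret_stabilizer\<close> (stabilizers of the class of \<open>x0\<close>) and
  \<open>ret_kernel\<close> (kernels of the actions on \<open>Ret\<^sup>k\<close>).\<close>

locale regular_solution = finite_solution +
  fixes x0 :: 'a
  assumes x0_in_X: "x0 \<in> X"
    and transitive: "\<And>y. y \<in> X \<Longrightarrow> \<exists>g\<in>\<G>. g x0 = y"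
    and regular: "\<And>g h. g \<in> \<G> \<Longrightarrow> h \<in> \<G> \<Longrightarrow> g x0 = h x0 \<Longrightarrow> g = h"
begin

abbreviation GX where "GX \<equiv> BX\<lparr>carrier := \<G>\<rparr>"

definition \<sigma>_of :: "('a \<Rightarrow> 'a) \<Rightarrow> 'a \<Rightarrow> 'a" where "\<sigma>_of g = \<sigma>_perm (g x0)"

definition ret_stabilizer :: "nat \<Rightarrow> ('a \<Rightarrow> 'a) set" where
  "ret_stabilizer k = {g \<in> \<G>. (g x0, x0) \<in> ret k}"

definition ret_kernel :: "nat \<Rightarrow> ('a \<Rightarrow> 'a) set" where
  "ret_kernel k = {g \<in> \<G>. \<forall>z\<in>X. (g z, z) \<in> ret k}"

lemma group_GX: "group GX"
  using subgroup.subgroup_is_group[OF ybe_group_subgroup group_BijGroup] .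

lemma GX_inv: "g \<in> \<G> \<Longrightarrow> inv\<^bsub>GX\<^esub> g = inv\<^bsub>BX\<^esub> g"
  using group.m_inv_consistent[OF group_BijGroup ybe_group_subgroup] by simp

lemma ybe_group_one: "\<one>\<^bsub>BX\<^esub> \<in> \<G>"
  using subgroup.one_closed[OF ybe_group_subgroup] .

lemma ybe_group_mult: "g \<in> \<G> \<Longrightarrow> h \<in> \<G> \<Longrightarrow> g \<otimes>\<^bsub>BX\<^esub> h \<in> \<G>"
  using subgroup.m_closed[OF ybe_group_subgroup] .

lemma ybe_group_inv: "g \<in> \<G> \<Longrightarrow> inv\<^bsub>BX\<^esub> g \<in> \<G>"
  using subgroup.m_inv_closed[OF ybe_group_subgroup] .

lemma ybe_group_mult_apply: "g \<in> \<G> \<Longrightarrow> h \<in> \<G> \<Longrightarrow> x \<in> X \<Longrightarrow> (g \<otimes>\<^bsub>BX\<^esub> h) x = g (h x)"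
  using Bij_mult_apply ybe_group_Bij by blast

lemma ybe_group_inv_apply_apply: "g \<in> \<G> \<Longrightarrow> x \<in> X \<Longrightarrow> (inv\<^bsub>BX\<^esub> g) (g x) = x"
  using Bij_inv_apply_apply ybe_group_Bij by blast

lemma ybe_group_apply_inv_apply: "g \<in> \<G> \<Longrightarrow> x \<in> X \<Longrightarrow> g ((inv\<^bsub>BX\<^esub> g) x) = x"
  using Bij_apply_inv_apply ybe_group_Bij by blast

lemma \<sigma>_of_in_ybe_group: "g \<in> \<G> \<Longrightarrow> \<sigma>_of g \<in> \<G>"
  unfolding \<sigma>_of_def using \<sigma>_perm_in_ybe_group ybe_group_apply x0_in_X by simp

lemma ret_stabilizer_subgroup: "subgroup (ret_stabilizer k) GX"
proof (rule group.subgroupI[OF group_GX])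
  show "ret_stabilizer k \<subseteq> carrier GX" unfolding ret_stabilizer_def by auto
  show "ret_stabilizer k \<noteq> {}"
    unfolding ret_stabilizer_def using ybe_group_one Bij_one_apply x0_in_X ret_refl by auto
next
  fix a assume "a \<in> ret_stabilizer k"
  then have a: "a \<in> \<G>" "(a x0, x0) \<in> ret k" unfolding ret_stabilizer_def by auto
  have "((inv\<^bsub>BX\<^esub> a) (a x0), (inv\<^bsub>BX\<^esub> a) x0) \<in> ret k" using ret_ybe_group[OF ybe_group_inv a(2)] a(1) .
  then have "((inv\<^bsub>BX\<^esub> a) x0, x0) \<in> ret k" using ybe_group_inv_apply_apply a x0_in_X ret_sym by simp
  then show "inv\<^bsub>GX\<^esub> a \<in> ret_stabilizer k" unfolding ret_stabilizer_def using GX_inv a ybe_group_inv by simp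
next
  fix a b assume "a \<in> ret_stabilizer k" "b \<in> ret_stabilizer k"
  then have ab: "a \<in> \<G>" "b \<in> \<G>" "(a x0, x0) \<in> ret k" "(b x0, x0) \<in> ret k"
    unfolding ret_stabilizer_def by auto
  have "(a (b x0), x0) \<in> ret k" using ret_ybe_group[OF ab(1) ab(4)] ret_trans ab(3) by blast
  then show "a \<otimes>\<^bsub>GX\<^esub> b \<in> ret_stabilizer k"
    unfolding ret_stabilizer_def using ab ybe_group_mult ybe_group_mult_apply x0_in_X by simp
qed

lemma ret_kernel_subgroup: "subgroup (ret_kernel k) GX"
proof (rule group.subgroupI[OF group_GX])
  show "ret_kernel k \<subseteq> carrier GX" unfolding ret_kernel_def by auto
  show "ret_kernel k \<noteq> {}" unfolding ret_kernel_def using ybe_group_one Bij_one_apply ret_refl by auto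
next
  fix a assume "a \<in> ret_kernel k"
  then have a: "a \<in> \<G>" "\<And>z. z \<in> X \<Longrightarrow> (a z, z) \<in> ret k" unfolding ret_kernel_def by auto
  have "((inv\<^bsub>BX\<^esub> a) z, z) \<in> ret k" if z: "z \<in> X" for z
    using a(2)[OF ybe_group_apply[OF ybe_group_inv[OF a(1)] z]] ybe_group_apply_inv_apply[OF a(1) z] ret_sym
    by simp
  then show "inv\<^bsub>GX\<^esub> a \<in> ret_kernel k" unfolding ret_kernel_def using GX_inv a ybe_group_inv by simp
next
  fix a b assume "a \<in> ret_kernel k" "b \<in> ret_kernel k"
  then have ab: "a \<in> \<G>" "b \<in> \<G>" "\<And>z. z \<in> X \<Longrightarrow> (a z, z) \<in> ret k" "\<And>z. z \<in> X \<Longrightarrow> (b z, z) \<in> ret k"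
    unfolding ret_kernel_def by auto
  have "((a \<otimes>\<^bsub>BX\<^esub> b) z, z) \<in> ret k" if z: "z \<in> X" for z
    using ab(3)[OF ybe_group_apply[OF ab(2) z]] ab(4)[OF z] ret_trans ybe_group_mult_apply ab z by metis
  then show "a \<otimes>\<^bsub>GX\<^esub> b \<in> ret_kernel k" unfolding ret_kernel_def using ab ybe_group_mult by simp
qed

lemma ret_kernel_normal: "ret_kernel k \<lhd> GX"
  unfolding group.normal_inv_iff[OF group_GX]
proof (intro conjI ballI ret_kernel_subgroup)
  fix g h assume "g \<in> carrier GX" and h: "h \<in> ret_kernel k"
  then have g: "g \<in> \<G>" by simp
  have hG: "h \<in> \<G>" and h_ret: "\<And>z. z \<in> X \<Longrightarrow> (h z, z) \<in> ret k" using h unfolding ret_kernel_def by auto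
  have "((g \<otimes>\<^bsub>BX\<^esub> h \<otimes>\<^bsub>BX\<^esub> inv\<^bsub>BX\<^esub> g) z, z) \<in> ret k" if z: "z \<in> X" for z
  proof -
    have iz: "(inv\<^bsub>BX\<^esub> g) z \<in> X" using ybe_group_apply[OF ybe_group_inv[OF g] z] .
    have "(g (h ((inv\<^bsub>BX\<^esub> g) z)), g ((inv\<^bsub>BX\<^esub> g) z)) \<in> ret k" using ret_ybe_group[OF g h_ret[OF iz]] .
    then show ?thesis
      using ybe_group_mult_apply ybe_group_mult ybe_group_inv g hG z iz ybe_group_apply_inv_apply[OF g z]
      by simp
  qed
  then show "g \<otimes>\<^bsub>GX\<^esub> h \<otimes>\<^bsub>GX\<^esub> inv\<^bsub>GX\<^esub> g \<in> ret_kernel k"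
    unfolding ret_kernel_def using g hG ybe_group_mult ybe_group_inv GX_inv by simp
qed

lemma ret_kernel_subset_ret_stabilizer: "ret_kernel k \<subseteq> ret_stabilizer k"
  unfolding ret_kernel_def ret_stabilizer_def using x0_in_X by auto

lemma rcos_ret_kernel_\<sigma>_of:
  assumes a: "a \<in> \<G>" and b: "b \<in> \<G>"
  shows "ret_kernel j #>\<^bsub>GX\<^esub> \<sigma>_of a = ret_kernel j #>\<^bsub>GX\<^esub> \<sigma>_of b \<longleftrightarrow> (a x0, b x0) \<in> ret (Suc j)"
proof -
  define x where "x = a x0"
  define y where "y = b x0"
  have xX: "x \<in> X" and yX: "y \<in> X" unfolding x_def y_def using ybe_group_apply a b x0_in_X by auto
  have x\<G>: "\<sigma>_perm x \<in> \<G>" and y\<G>: "\<sigma>_perm y \<in> \<G>" using \<sigma>_perm_in_ybe_group xX yX by auto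
  have "ret_kernel j #>\<^bsub>GX\<^esub> \<sigma>_of a = ret_kernel j #>\<^bsub>GX\<^esub> \<sigma>_of b
      \<longleftrightarrow> inv\<^bsub>BX\<^esub> (\<sigma>_perm x) \<otimes>\<^bsub>BX\<^esub> \<sigma>_perm y \<in> ret_kernel j"
    using group.normal_rcos_eq_iff[OF group_GX ret_kernel_normal] \<sigma>_of_in_ybe_group a b GX_inv x\<G>
    unfolding \<sigma>_of_def x_def y_def by simp
  also have "\<dots> \<longleftrightarrow> (\<forall>z\<in>X. (\<sigma>_inv x (\<sigma> y z), z) \<in> ret j)"
    using ybe_group_mult_apply[OF ybe_group_inv[OF x\<G>] y\<G>] inv_\<sigma>_perm_apply[OF xX] ybe_group_mult
      ybe_group_inv x\<G> y\<G> yX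
    unfolding ret_kernel_def by simp
  also have "\<dots> \<longleftrightarrow> (\<forall>z\<in>X. (\<sigma> y z, \<sigma> x z) \<in> ret j)"
  proof (intro iffI ballI)
    fix z assume "\<forall>z\<in>X. (\<sigma>_inv x (\<sigma> y z), z) \<in> ret j" "z \<in> X"
    then show "(\<sigma> y z, \<sigma> x z) \<in> ret j" using ret_\<sigma>[of _ _ j x] xX yX by fastforce
  next
    fix z assume "\<forall>z\<in>X. (\<sigma> y z, \<sigma> x z) \<in> ret j" "z \<in> X"
    then show "(\<sigma>_inv x (\<sigma> y z), z) \<in> ret j" using ret_\<sigma>_inv[of _ _ j x] xX yX by fastforce
  qed
  also have "\<dots> \<longleftrightarrow> (x, y) \<in> ret (Suc j)" using xX yX ret_sym by auto
  finally show ?thesis unfolding x_def y_def .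
qed

lemma rcos_ret_kernel:
  assumes "ret_kernel j = ret_stabilizer j" and a: "a \<in> \<G>" and b: "b \<in> \<G>"
  shows "ret_kernel j #>\<^bsub>GX\<^esub> a = ret_kernel j #>\<^bsub>GX\<^esub> b \<longleftrightarrow> (a x0, b x0) \<in> ret j"
proof -
  have "ret_kernel j #>\<^bsub>GX\<^esub> a = ret_kernel j #>\<^bsub>GX\<^esub> b \<longleftrightarrow> ((inv\<^bsub>BX\<^esub> a) (b x0), x0) \<in> ret j"
    using group.normal_rcos_eq_iff[OF group_GX ret_kernel_normal[of j]] a b assms(1) GX_inv ybe_group_mult
      ybe_group_inv ybe_group_mult_apply[OF ybe_group_inv[OF a] b x0_in_X]
    unfolding ret_stabilizer_def by simp
  also have "\<dots> \<longleftrightarrow> (b x0, a x0) \<in> ret j"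
    using ret_ybe_group[OF a] ret_ybe_group[OF ybe_group_inv[OF a]] ybe_group_apply_inv_apply[OF a]
      ybe_group_inv_apply_apply[OF a x0_in_X] ybe_group_apply[OF b x0_in_X]
    by metis
  finally show ?thesis using ret_sym by blast
qed

lemma \<sigma>_of_sym:
  assumes a: "a \<in> \<G>" and b: "b \<in> \<G>"
  shows "\<sigma>_of a \<otimes>\<^bsub>GX\<^esub> \<sigma>_of (inv\<^bsub>GX\<^esub> (\<sigma>_of a) \<otimes>\<^bsub>GX\<^esub> b)
    = \<sigma>_of b \<otimes>\<^bsub>GX\<^esub> \<sigma>_of (inv\<^bsub>GX\<^esub> (\<sigma>_of b) \<otimes>\<^bsub>GX\<^esub> a)"
proof -
  define x where "x = a x0"
  define y where "y = b x0"
  have xX: "x \<in> X" and yX: "y \<in> X" unfolding x_def y_def using ybe_group_apply a b x0_in_X by auto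
  have x\<G>: "\<sigma>_perm x \<in> \<G>" and y\<G>: "\<sigma>_perm y \<in> \<G>" using \<sigma>_perm_in_ybe_group xX yX by auto
  have "(inv\<^bsub>BX\<^esub> (\<sigma>_perm x) \<otimes>\<^bsub>BX\<^esub> b) x0 = \<sigma>_inv x y"
    using ybe_group_mult_apply[OF ybe_group_inv[OF x\<G>] b x0_in_X] inv_\<sigma>_perm_apply[OF xX yX]
    unfolding y_def by simp
  moreover have "(inv\<^bsub>BX\<^esub> (\<sigma>_perm y) \<otimes>\<^bsub>BX\<^esub> a) x0 = \<sigma>_inv y x"
    using ybe_group_mult_apply[OF ybe_group_inv[OF y\<G>] a x0_in_X] inv_\<sigma>_perm_apply[OF yX xX]
    unfolding x_def by simp
  moreover have "\<sigma>_perm x \<otimes>\<^bsub>BX\<^esub> \<sigma>_perm (\<sigma>_inv x y) = \<sigma>_perm y \<otimes>\<^bsub>BX\<^esub> \<sigma>_perm (\<sigma>_inv y x)"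
  proof -
    have "compose X (\<sigma>_perm x) (\<sigma>_perm (\<sigma>_inv x y)) = compose X (\<sigma>_perm y) (\<sigma>_perm (\<sigma>_inv y x))"
      using \<sigma>_\<sigma>_inv_sym[OF xX yX] xX yX by (auto simp: compose_def fun_eq_iff)
    then show ?thesis using \<sigma>_perm_Bij xX yX by (simp add: BijGroup_def)
  qed
  ultimately show ?thesis using GX_inv x\<G> y\<G> unfolding \<sigma>_of_def x_def y_def by simp
qed

end

section \<open>Divisor chains of squarefree numbers\<close>

lemma squarefree_prime_square_not_dvd:
  fixes N s :: nat
  assumes "squarefree N" "prime s"
  shows "\<not> s * s dvd N"
  using squarefreeD[OF assms(1), of s] assms(2) by (auto simp: power2_eq_square)

lemma squarefree_mult_dvd_coprime:
  fixes N a b :: nat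
  assumes "squarefree N" "a * b dvd N"
  shows "coprime a b"
proof (rule ccontr)
  assume "\<not> coprime a b"
  then obtain s where s: "prime s" "s dvd a" "s dvd b"
    using prime_factor_nat[of "gcd a b"] by (auto simp: coprime_iff_gcd_eq_1)
  then have "s * s dvd N" using assms(2) by (meson dvd_trans mult_dvd_mono)
  then show False using squarefree_prime_square_not_dvd[OF assms(1) s(1)] by simp
qed

lemma squarefree_dvd_prime_factors_psubset:
  fixes N d1 d2 :: nat
  assumes "squarefree N" "d1 dvd d2" "d2 dvd N" "d1 \<noteq> d2"
  shows "prime_factors d1 \<subset> prime_factors d2"
proof -
  have d2: "d2 \<noteq> 0" using assms(1,3) not_squarefree_0 dvd_0_left by metis
  obtain t where t: "d2 = d1 * t" using assms(2) by (auto elim: dvdE)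
  then obtain s where s: "prime s" "s dvd t" using prime_factor_nat[of t] assms(4) by auto
  have "prime_factors d1 \<subseteq> prime_factors d2"
    using assms(2) d2 by (auto simp: in_prime_factors_iff intro: dvd_trans)
  moreover have "s \<in> prime_factors d2" using s t d2 by (auto simp: in_prime_factors_iff)
  moreover have "s \<notin> prime_factors d1"
  proof
    assume "s \<in> prime_factors d1"
    then have "s dvd d1" by auto
    then have "s * s dvd d1 * t" using s(2) by (rule mult_dvd_mono)
    then have "s * s dvd N" using t assms(3) by (metis dvd_trans)
    then show False using squarefree_prime_square_not_dvd[OF assms(1) s(1)] by simp
  qed
  ultimately show ?thesis by (metis psubsetI)
qed

lemma card_prime_factors_dvd_chain:
  fixes s :: "nat \<Rightarrow> nat" and N :: nat
  assumes dvd: "\<And>i. i < J \<Longrightarrow> s i dvd s (Suc i)" and ne: "\<And>i. i < J \<Longrightarrow> s i \<noteq> s (Suc i)"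
    and "s J dvd N" "squarefree N" "i \<le> j" "j \<le> J"
  shows "card (prime_factors (s i)) + (j - i) \<le> card (prime_factors (s j))"
proof -
  have sN: "s k dvd N" if "k \<le> J" for k
  proof -
    have "s k dvd s J" using that
    proof (induction k rule: inc_induct)
      case (step m) then show ?case using dvd dvd_trans by blast
    qed simp
    then show ?thesis using assms(3) dvd_trans by blast
  qed
  show ?thesis using assms(5,6)
  proof (induction j rule: dec_induct)
    case (step m)
    have "prime_factors (s m) \<subset> prime_factors (s (Suc m))"
      using squarefree_dvd_prime_factors_psubset[OF assms(4) dvd sN ne] step by simp
    then have "card (prime_factors (s m)) < card (prime_factors (s (Suc m)))"
      by (rule psubset_card_mono[rotated]) simp
    then show ?case using step by simp
  qed simp
qed

lemma squarefree_dvd_prime_quotient: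
  fixes N d t :: nat
  assumes "squarefree N" "d * t dvd N"
    and "card (prime_factors (d * t)) = card (prime_factors d) + 1"
  shows "prime t"
proof -
  have "d * t \<noteq> 0" using assms(1,2) not_squarefree_0 dvd_0_left by metis
  then have d: "d \<noteq> 0" and t: "t \<noteq> 0" by auto
  have "coprime d t" using squarefree_mult_dvd_coprime[OF assms(1,2)] .
  then have "prime_factors (d * t) = prime_factors d \<union> prime_factors t"
    "prime_factors d \<inter> prime_factors t = {}"
    using prime_factors_product[OF d t] by (auto simp: coprime_def in_prime_factors_iff)
  then have "card (prime_factors t) = 1" using assms(3) by (simp add: card_Un_disjoint)
  then obtain s where ps: "prime_factors t = {s}" using card_1_singletonE by blast
  then have s: "prime s" "s dvd t" by auto
  obtain t' where t': "t = s * t'" using s(2) by (auto elim: dvdE)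
  have "t' = 1"
  proof (rule ccontr)
    assume "t' \<noteq> 1"
    then obtain s' where s': "prime s'" "s' dvd t'" using prime_factor_nat by blast
    then have "s' \<in> prime_factors t" using t t' by (auto simp: in_prime_factors_iff)
    then have "s * s dvd d * t" using ps s' t' by (simp add: mult_dvd_mono)
    then show False using squarefree_prime_square_not_dvd[OF assms(1) s(1)] assms(2) dvd_trans by blast
  qed
  then show ?thesis using t' s by simp
qed

lemma card_prime_factors_prod_le:
  fixes p :: "nat \<Rightarrow> nat"
  assumes "\<forall>i<n. prime (p i)"
  shows "card (prime_factors (\<Prod>i<n. p i)) \<le> n"
proof -
  have "prime_factors (\<Prod>i<n. p i) \<subseteq> p ` {..<n}"
  proof
    fix s assume "s \<in> prime_factors (\<Prod>i<n. p i)"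
    then have s: "prime s" "s dvd (\<Prod>i<n. p i)" by auto
    then obtain i where "i < n" "s dvd p i" using prime_dvd_prod_iff[of "{..<n}" s p] by auto
    then show "s \<in> p ` {..<n}" using primes_dvd_imp_eq s(1) assms by blast
  qed
  then show ?thesis using card_mono card_image_le[of "{..<n}" p] by (metis card_lessThan finite_imageI
      finite_lessThan le_trans)
qed

lemma squarefree_prod_distinct_primes:
  fixes p :: "nat \<Rightarrow> nat"
  assumes "\<forall>i<n. prime (p i)" "inj_on p {..<n}"
  shows "squarefree (\<Prod>i<n. p i)"
  by (rule squarefree_prod_coprime) (use assms in \<open>auto intro: primes_coprime squarefree_prime dest: inj_onD\<close>)

section \<open>The top layers of the filtration\<close>

locale leveled_solution = regular_solution +
  fixes n N :: nat
  assumes ret_top: "ret n = X \<times> X"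
    and ret_strict: "\<And>k. k < n \<Longrightarrow> ret k \<noteq> ret (Suc k)"
    and card_X: "card X = N"
    and squarefree_N: "squarefree N"
    and card_prime_factors_N: "card (prime_factors N) \<le> n"
begin

lemma card_ybe_group: "card \<G> = N"
proof -
  have "bij_betw (\<lambda>g. g x0) \<G> X"
    unfolding bij_betw_def inj_on_def using regular ybe_group_apply x0_in_X transitive by blast
  then show ?thesis using bij_betw_same_card card_X by metis
qed

lemma finite_GX: "finite (carrier GX)"
  using finite_ybe_group by simp

lemma ret_stabilizer_top: "ret_stabilizer n = \<G>"
  unfolding ret_stabilizer_def ret_top using ybe_group_apply x0_in_X by blast

lemma ret_stabilizer_0: "ret_stabilizer 0 = {\<one>\<^bsub>BX\<^esub>}"
proof
  show "ret_stabilizer 0 \<subseteq> {\<one>\<^bsub>BX\<^esub>}"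
  proof
    fix g assume "g \<in> ret_stabilizer 0"
    then have "g \<in> \<G>" "g x0 = \<one>\<^bsub>BX\<^esub> x0"
      unfolding ret_stabilizer_def using Bij_one_apply x0_in_X by (auto simp: Id_on_def)
    then show "g \<in> {\<one>\<^bsub>BX\<^esub>}" using regular ybe_group_one by blast
  qed
  show "{\<one>\<^bsub>BX\<^esub>} \<subseteq> ret_stabilizer 0"
    unfolding ret_stabilizer_def using ybe_group_one Bij_one_apply x0_in_X by (simp add: Id_on_def)
qed

lemma ret_stabilizer_mono: "ret_stabilizer j \<subseteq> ret_stabilizer (Suc j)"
  unfolding ret_stabilizer_def using ret_mono by auto

lemma ret_kernel_mono: "ret_kernel j \<subseteq> ret_kernel (Suc j)"
  unfolding ret_kernel_def using ret_mono by blast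

lemma ret_stabilizer_strict:
  assumes "j < n"
  shows "ret_stabilizer j \<noteq> ret_stabilizer (Suc j)"
proof
  assume eq: "ret_stabilizer j = ret_stabilizer (Suc j)"
  have "(x, y) \<in> ret j" if xy: "(x, y) \<in> ret (Suc j)" for x y
  proof -
    obtain g where g: "g \<in> \<G>" "g x0 = x" using transitive xy ret_subset by blast
    obtain h where h: "h \<in> \<G>" "h x0 = y" using transitive xy ret_subset by blast
    define u where "u = inv\<^bsub>BX\<^esub> g \<otimes>\<^bsub>BX\<^esub> h"
    have u: "u \<in> \<G>" "u x0 = (inv\<^bsub>BX\<^esub> g) y"
      unfolding u_def using g h ybe_group_mult ybe_group_inv ybe_group_mult_apply x0_in_X by auto
    have "((inv\<^bsub>BX\<^esub> g) x, (inv\<^bsub>BX\<^esub> g) y) \<in> ret (Suc j)" using ret_ybe_group[OF ybe_group_inv[OF g(1)] xy] .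
    then have "u \<in> ret_stabilizer (Suc j)"
      unfolding ret_stabilizer_def using u ybe_group_inv_apply_apply[OF g(1) x0_in_X] g(2) ret_sym by auto
    then have "(u x0, x0) \<in> ret j" using eq unfolding ret_stabilizer_def by blast
    then have "(g (u x0), g x0) \<in> ret j" using ret_ybe_group[OF g(1)] by blast
    then show ?thesis
      using u(2) ybe_group_apply_inv_apply[OF g(1)] g(2) h xy ret_subset ret_sym by (metis mem_Sigma_iff subsetD)
  qed
  then have "ret (Suc j) \<subseteq> ret j" by (rule subrelI)
  then show False using ret_strict[OF assms] ret_mono by blast
qed

lemma ret_stabilizer_Suc_iff:
  "b \<in> \<G> \<Longrightarrow> b \<in> ret_stabilizer (Suc j) \<longleftrightarrow>
    ret_kernel j #>\<^bsub>GX\<^esub> \<sigma>_of \<one>\<^bsub>BX\<^esub> = ret_kernel j #>\<^bsub>GX\<^esub> \<sigma>_of b"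
  unfolding ret_stabilizer_def
  using rcos_ret_kernel_\<sigma>_of[OF ybe_group_one, of b j] Bij_one_apply x0_in_X ret_sym by auto

lemma ret_kernel_strict:
  assumes "Suc j < n"
  shows "ret_kernel j \<noteq> ret_kernel (Suc j)"
proof
  assume eq: "ret_kernel j = ret_kernel (Suc j)"
  have "b \<in> ret_stabilizer (Suc j)" if b: "b \<in> ret_stabilizer (Suc (Suc j))" for b
  proof -
    have "b \<in> \<G>" using b unfolding ret_stabilizer_def by simp
    then show ?thesis using b ret_stabilizer_Suc_iff[of b j] ret_stabilizer_Suc_iff[of b "Suc j"] eq by simp
  qed
  then show False using ret_stabilizer_strict[OF assms] ret_stabilizer_mono by blast
qed

lemma card_ret_stabilizer_dvd: "card (ret_stabilizer j) dvd card (ret_stabilizer (Suc j))"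
  using group.card_subgroup_dvd[OF group_GX finite_GX ret_stabilizer_subgroup ret_stabilizer_subgroup
      ret_stabilizer_mono] .

lemma card_ret_kernel_dvd: "card (ret_kernel j) dvd card (ret_kernel (Suc j))"
  using group.card_subgroup_dvd[OF group_GX finite_GX ret_kernel_subgroup ret_kernel_subgroup
      ret_kernel_mono] .

lemma card_ret_kernel_dvd_ret_stabilizer: "card (ret_kernel j) dvd card (ret_stabilizer j)"
  using group.card_subgroup_dvd[OF group_GX finite_GX ret_kernel_subgroup ret_stabilizer_subgroup
      ret_kernel_subset_ret_stabilizer] .

lemma card_ret_stabilizer_dvd_N: "card (ret_stabilizer j) dvd N"
  using group.card_subgroup_dvd[OF group_GX finite_GX ret_stabilizer_subgroup group.subgroup_self[OF group_GX]]
    card_ybe_group unfolding ret_stabilizer_def by auto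

lemma card_ret_stabilizer_strict: "j < n \<Longrightarrow> card (ret_stabilizer j) \<noteq> card (ret_stabilizer (Suc j))"
  using ret_stabilizer_strict card_subset_eq[OF _ ret_stabilizer_mono] finite_ybe_group
  unfolding ret_stabilizer_def by (metis (no_types, lifting) finite_subset mem_Collect_eq subsetI)

lemma card_ret_kernel_strict: "Suc j < n \<Longrightarrow> card (ret_kernel j) \<noteq> card (ret_kernel (Suc j))"
  using ret_kernel_strict card_subset_eq[OF _ ret_kernel_mono] finite_ybe_group
  unfolding ret_kernel_def by (metis (no_types, lifting) finite_subset mem_Collect_eq subsetI)

lemma card_prime_factors_ret_stabilizer:
  assumes "j \<le> n"
  shows "card (prime_factors (card (ret_stabilizer j))) = j"
proof -
  have chain: "card (prime_factors (card (ret_stabilizer i))) + (k - i)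
      \<le> card (prime_factors (card (ret_stabilizer k)))" if "i \<le> k" "k \<le> n" for i k
    using card_prime_factors_dvd_chain[of n "\<lambda>j. card (ret_stabilizer j)", OF card_ret_stabilizer_dvd
        card_ret_stabilizer_strict card_ret_stabilizer_dvd_N squarefree_N that] .
  have "card (ret_stabilizer 0) = 1" "card (ret_stabilizer n) = N"
    using ret_stabilizer_0 ret_stabilizer_top card_ybe_group by simp_all
  then show ?thesis using chain[of 0 j] chain[of j n] assms card_prime_factors_N by simp
qed

lemma ret_kernel_eq_ret_stabilizer:
  assumes "j < n"
  shows "ret_kernel j = ret_stabilizer j"
proof -
  have "card (prime_factors (card (ret_kernel 0))) + (j - 0) \<le> card (prime_factors (card (ret_kernel j)))"
  proof (rule card_prime_factors_dvd_chain[of "n - 1" _ N])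
    show "\<And>i. i < n - 1 \<Longrightarrow> card (ret_kernel i) \<noteq> card (ret_kernel (Suc i))"
      using card_ret_kernel_strict by simp
    show "card (ret_kernel (n - 1)) dvd N"
      using dvd_trans[OF card_ret_kernel_dvd_ret_stabilizer card_ret_stabilizer_dvd_N] .
  qed (use card_ret_kernel_dvd squarefree_N assms in auto)
  then have kernel: "j \<le> card (prime_factors (card (ret_kernel j)))" by simp
  have stabilizer: "card (prime_factors (card (ret_stabilizer j))) = j"
    using card_prime_factors_ret_stabilizer assms by simp
  have "card (ret_kernel j) = card (ret_stabilizer j)"
  proof (rule ccontr)
    assume "card (ret_kernel j) \<noteq> card (ret_stabilizer j)"
    then have "prime_factors (card (ret_kernel j)) \<subset> prime_factors (card (ret_stabilizer j))"
      using squarefree_dvd_prime_factors_psubset[OF squarefree_N card_ret_kernel_dvd_ret_stabilizer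
          card_ret_stabilizer_dvd_N] by blast
    then have "card (prime_factors (card (ret_kernel j))) < card (prime_factors (card (ret_stabilizer j)))"
      by (rule psubset_card_mono[rotated]) simp
    then show False using kernel stabilizer by simp
  qed
  then show ?thesis
    using card_subset_eq[OF _ ret_kernel_subset_ret_stabilizer] finite_ybe_group
    unfolding ret_stabilizer_def by (metis (no_types, lifting) finite_subset mem_Collect_eq subsetI)
qed

lemma ret_stabilizer_prime_index:
  assumes "Suc j \<le> n"
  obtains t where "card (ret_stabilizer (Suc j)) = t * card (ret_stabilizer j)" "prime t"
proof -
  obtain t where t: "card (ret_stabilizer (Suc j)) = card (ret_stabilizer j) * t"
    using card_ret_stabilizer_dvd by (auto elim: dvdE)
  moreover have "card (prime_factors (card (ret_stabilizer (Suc j))))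
      = card (prime_factors (card (ret_stabilizer j))) + 1"
    using card_prime_factors_ret_stabilizer assms by simp
  ultimately have "prime t"
    using squarefree_dvd_prime_quotient[OF squarefree_N] card_ret_stabilizer_dvd_N[of "Suc j"] by simp
  then show ?thesis using that[of t] t by (simp add: mult.commute)
qed

lemma top_layers_coset_chain:
  assumes m: "Suc (Suc (Suc m)) = n"
  obtains p q t where
    "coset_chain GX (ret_kernel (Suc m)) (ret_kernel (Suc (Suc m))) q t \<sigma>_of (ret_kernel m) p"
proof -
  let ?K = "ret_kernel m" and ?P = "ret_kernel (Suc m)" and ?A = "ret_kernel (Suc (Suc m))"
  have KH: "ret_kernel j = ret_stabilizer j" if "j \<le> Suc (Suc m)" for j
    using ret_kernel_eq_ret_stabilizer that m by simp
  obtain p where p: "card ?P = p * card ?K" "prime p"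
    using ret_stabilizer_prime_index[of m] KH m by auto
  obtain q where q: "card ?A = q * card ?P" "prime q"
    using ret_stabilizer_prime_index[of "Suc m"] KH m by auto
  obtain t where t: "card (carrier GX) = t * card ?A" "prime t"
    using ret_stabilizer_prime_index[of "Suc (Suc m)"] KH[of "Suc (Suc m)"] ret_stabilizer_top m by auto
  have "card (ret_stabilizer (Suc (Suc m))) = (p * q) * card ?K"
    using KH p q by simp
  then have "p * q dvd N"
    using card_ret_stabilizer_dvd_N[of "Suc (Suc m)"] by (metis dvd_mult_left)
  then have "coprime p q" by (rule squarefree_mult_dvd_coprime[OF squarefree_N])
  moreover have "N = (q * t) * card ?P"
    using t q card_ybe_group by simp
  then have "q * t dvd N" by simp
  then have "coprime q t" by (rule squarefree_mult_dvd_coprime[OF squarefree_N])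
  moreover have "\<sigma>_of \<in> carrier GX \<rightarrow> carrier GX" using \<sigma>_of_in_ybe_group by auto
  moreover have "?A #>\<^bsub>GX\<^esub> \<sigma>_of a = ?A #>\<^bsub>GX\<^esub> \<sigma>_of b" if "a \<in> carrier GX" "b \<in> carrier GX" for a b
  proof -
    have "(a x0, b x0) \<in> ret (Suc (Suc (Suc m)))"
      unfolding m ret_top using that ybe_group_apply x0_in_X by simp
    then show ?thesis using rcos_ret_kernel_\<sigma>_of that by (simp del: ret_rel.simps)
  qed
  ultimately have "coset_chain GX ?P ?A q t \<sigma>_of ?K p"
  proof (intro coset_chain.intro coset_pair.intro coset_pair_axioms.intro coset_chain_axioms.intro group_GX
      finite_GX ret_kernel_normal ret_kernel_mono)
    show "card ?P = p * card ?K" "card ?A = q * card ?P" "card (carrier GX) = t * card ?A" "prime p"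
      using p q t by simp_all
    show "a \<in> carrier GX \<Longrightarrow> b \<in> carrier GX \<Longrightarrow> \<sigma>_of a \<otimes>\<^bsub>GX\<^esub> \<sigma>_of (inv\<^bsub>GX\<^esub> \<sigma>_of a \<otimes>\<^bsub>GX\<^esub> b)
        = \<sigma>_of b \<otimes>\<^bsub>GX\<^esub> \<sigma>_of (inv\<^bsub>GX\<^esub> \<sigma>_of b \<otimes>\<^bsub>GX\<^esub> a)" for a b
      using \<sigma>_of_sym by simp
    show "a \<in> carrier GX \<Longrightarrow> b \<in> carrier GX \<Longrightarrow>
        ?P #>\<^bsub>GX\<^esub> \<sigma>_of a = ?P #>\<^bsub>GX\<^esub> \<sigma>_of b \<longleftrightarrow> ?A #>\<^bsub>GX\<^esub> a = ?A #>\<^bsub>GX\<^esub> b" for a b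
      using rcos_ret_kernel_\<sigma>_of[of a b "Suc m"] rcos_ret_kernel[OF KH[of "Suc (Suc m)"], of a b] by simp
    show "a \<in> carrier GX \<Longrightarrow> b \<in> carrier GX \<Longrightarrow>
        ?K #>\<^bsub>GX\<^esub> \<sigma>_of a = ?K #>\<^bsub>GX\<^esub> \<sigma>_of b \<longleftrightarrow> ?P #>\<^bsub>GX\<^esub> a = ?P #>\<^bsub>GX\<^esub> b" for a b
      using rcos_ret_kernel_\<sigma>_of[of a b m] rcos_ret_kernel[OF KH[of "Suc m"], of a b] by simp
  qed
  then show ?thesis using that by blast
qed

theorem level_le_two: "n \<le> 2"
proof (rule ccontr)
  assume "\<not> n \<le> 2"
  then have m: "Suc (Suc (Suc (n - 3))) = n" by simp
  obtain p q t where chain: "coset_chain GX (ret_kernel (Suc (n - 3))) (ret_kernel (Suc (Suc (n - 3))))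
      q t \<sigma>_of (ret_kernel (n - 3)) p"
    using top_layers_coset_chain[OF m] by blast
  let ?A = "ret_kernel (Suc (Suc (n - 3)))"
  have A: "subgroup ?A BX"
    using group.incl_subgroup[OF group_BijGroup ybe_group_subgroup ret_kernel_subgroup] .
  have "\<sigma>_perm x \<in> ?A" if x: "x \<in> X" for x
  proof -
    obtain g where "g \<in> \<G>" "g x0 = x" using transitive x by blast
    then show ?thesis using coset_chain.f_in_A[OF chain] unfolding \<sigma>_of_def by force
  qed
  then have "\<G> \<subseteq> ?A"
    unfolding ybe_group_eq using group.generate_subgroup_incl[OF group_BijGroup _ A] by blast
  then have "ret_stabilizer (Suc (Suc (n - 3))) = \<G>"
    using ret_kernel_eq_ret_stabilizer[of "Suc (Suc (n - 3))"] m unfolding ret_stabilizer_def by auto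
  moreover have "ret_stabilizer (Suc (Suc (Suc (n - 3)))) = \<G>" using ret_stabilizer_top m by simp
  ultimately show False using ret_stabilizer_strict[of "Suc (Suc (n - 3))"] m by simp
qed

end

theorem mainTheorem10:
  fixes X :: "'a set" and r :: "'a \<times> 'a \<Rightarrow> 'a \<times> 'a" and n :: nat and p :: "nat \<Rightarrow> nat"
  assumes "n > 2"
    and "\<forall>i<n. prime (p i)"
    and "inj_on p {..<n}"
    and "ybe_solution X r"
    and "ybe_indecomposable X r"
    and "multipermutation X r"
    and "card X = (\<Prod>i<n. p i)"
    and "mp_level X r n"
  shows "card (ybe_group X r) > (\<Prod>i<n. p i)"
proof (rule ccontr)
  assume small: "\<not> card (ybe_group X r) > (\<Prod>i<n. p i)"
  define N where "N = (\<Prod>i<n. p i)"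
  have squarefree: "squarefree N" unfolding N_def using squarefree_prod_distinct_primes assms(2,3) .
  have "p 0 dvd N" unfolding N_def using assms(1) by (intro dvd_prodI) auto
  moreover have "N \<noteq> 0" using squarefree not_squarefree_0 by metis
  ultimately have "p 0 \<le> N" by (simp add: dvd_imp_le)
  then have "card X \<ge> 2" using prime_ge_2_nat[of "p 0"] assms(1,2,7) unfolding N_def by simp
  then interpret finite_solution X r using assms(4) card.infinite by unfold_locales fastforce+
  obtain x0 where x0: "x0 \<in> X" using \<open>card X \<ge> 2\<close> by fastforce
  have regular: "inj_on (\<lambda>g. g x0) \<G>" using ybe_group_regular[OF assms(5) x0] small assms(7) by simp
  interpret regular_solution X r x0
    using x0 assms(5) regular unfolding ybe_indecomposable_def by unfold_locales (auto dest: inj_onD)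
  interpret leveled_solution X r x0 n N
    using mp_level_ret[OF assms(8) \<open>card X \<ge> 2\<close>] assms(7) squarefree card_prime_factors_prod_le[OF assms(2)]
    unfolding N_def by unfold_locales auto
  show False using level_le_two assms(1) by simp
qed

end
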